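(* Let $\mathcal{H}$ be a real Hilbert space, $A:\mathcal{H}\rightrightarrows\mathcal{H}$ maximal monotone with $A^{-1}(0)\neq\emptyset$, $\theta>0$, $p\geq1$ an integer, and suppose $(x,\lambda):[0,t_0]\to\mathcal{H}\times(0,+\infty)$ is a solution of \[ \dot{x}(t)+x(t)-(I+\lambda(t)A)^{-1}x(t)=0,\qquad \lambda(t)\,\|(I+\lambda(t)A)^{-1}x(t)-x(t)\|^{p-1}=\theta, \] with $x(0)\in\{x:0\notin Ax\}$, $x$ continuously differentiable and $\lambda$ locally Lipschitz. Then $|\dot\lambda(t)|\leq(p-1)\lambda(t)$ for almost all $t\in[0,t_0]$.
   Context: $(I+\lambda A)^{-1}$ is the resolvent of $A$ of index $\lambda>0$. *)

theory Defs
  imports "HOL-Analysis.Analysis"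
begin

definition monotone_op :: "('a::real_inner \<Rightarrow> 'a set) \<Rightarrow> bool" where
  "monotone_op A \<longleftrightarrow> (\<forall>x y u v. u \<in> A x \<longrightarrow> v \<in> A y \<longrightarrow> 0 \<le> (u - v) \<bullet> (x - y))"

definition maximal_monotone :: "('a::real_inner \<Rightarrow> 'a set) \<Rightarrow> bool" where
  "maximal_monotone A \<longleftrightarrow> monotone_op A \<and>
     (\<forall>B. monotone_op B \<and> (\<forall>x. A x \<subseteq> B x) \<longrightarrow> B = A)"

text \<open>Resolvent (I + lam A)^{-1} x: the unique y with x \<in> y + lam A y.\<close>
definition resolvent :: "real \<Rightarrow> ('a::real_inner \<Rightarrow> 'a set) \<Rightarrow> 'a \<Rightarrow> 'a" where
  "resolvent lam A x = (THE y. \<exists>u \<in> A y. x = y + lam *\<^sub>R u)"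

definition locally_lipschitz_on :: "real set \<Rightarrow> (real \<Rightarrow> real) \<Rightarrow> bool" where
  "locally_lipschitz_on S f \<longleftrightarrow>
     (\<forall>t\<in>S. \<exists>e>0. \<exists>L. L-lipschitz_on (cball t e \<inter> S) f)"

end

theory Submission
  imports Defs
begin

text \<open>Write \<open>J\<^sub>\<lambda>\<close> for the resolvent and \<open>\<phi>(t) = \<parallel>x'(t)\<parallel> = \<parallel>J\<^bsub>\<lambda>(t)\<^esub> x(t) - x(t)\<parallel>\<close>, so that
  \<open>\<theta> / \<lambda>(t) = \<phi>(t)\<^sup>p\<^sup>-\<^sup>1\<close>. Since \<open>I - J\<^sub>\<lambda>\<close> is nonexpansive, \<open>\<parallel>y - J\<^sub>\<lambda> y\<parallel>\<close> grows with \<open>\<lambda>\<close>, and on the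
  level set the larger step has the smaller residual, \<open>\<phi>\<close> is 1-Lipschitz with respect to \<open>\<parallel>x(s) - x(t)\<parallel>\<close>.
  Hence wherever \<open>\<lambda>\<close> is differentiable, \<open>\<bar>(\<theta>/\<lambda>)'\<bar> \<le> (p - 1) \<phi>\<^sup>p\<^sup>-\<^sup>2 \<parallel>x'\<parallel> = (p - 1) \<theta>/\<lambda>\<close>, i.e.
  \<open>\<bar>\<lambda>'\<bar> \<le> (p - 1) \<lambda>\<close>; and a locally Lipschitz \<open>\<lambda>\<close> is differentiable almost everywhere (Lebesgue's theorem, via
  Dini derivatives and the Vitali covering theorem). That resolvents are everywhere defined is Minty's theorem.\<close>

section \<open>Minty's theorem\<close>

text \<open>For a probability vector \<open>w\<close> on finitely many graph points \<open>(z, u)\<close> of \<open>A\<close>, the defect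
  \<open>\<Sum> w\<^sub>q \<langle>x - u\<^sub>q, z\<^sub>q\<rangle> - \<parallel>\<Sum> w\<^sub>q (x - u\<^sub>q + z\<^sub>q)/2\<parallel>\<^sup>2\<close> is nonpositive by monotonicity and
  concave along mixtures up to the term \<open>t (1 - t) \<parallel>Y - Y'\<parallel>\<^sup>2\<close> of the centres. So the centres of a maximising
  sequence form a Cauchy sequence, and its limit \<open>y\<close> satisfies \<open>\<langle>x - y - u, y - z\<rangle> \<ge> 0\<close> on the graph.\<close>

definition convex_weights :: "('a \<Rightarrow> 'a set) \<Rightarrow> ('a \<times> 'a) set \<Rightarrow> ('a \<times> 'a \<Rightarrow> real) \<Rightarrow> bool" where
  "convex_weights A S w \<longleftrightarrow> finite S \<and> (\<forall>q\<in>S. snd q \<in> A (fst q)) \<and>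
     (\<forall>q. q \<notin> S \<longrightarrow> w q = 0) \<and> (\<forall>q. 0 \<le> w q) \<and> sum w S = 1"

definition minty_pairing :: "'a::real_inner \<Rightarrow> ('a \<times> 'a) set \<Rightarrow> ('a \<times> 'a \<Rightarrow> real) \<Rightarrow> real" where
  "minty_pairing x S w = (\<Sum>q\<in>S. w q * ((x - snd q) \<bullet> fst q))"

definition minty_center :: "'a::real_inner \<Rightarrow> ('a \<times> 'a) set \<Rightarrow> ('a \<times> 'a \<Rightarrow> real) \<Rightarrow> 'a" where
  "minty_center x S w = (\<Sum>q\<in>S. w q *\<^sub>R midpoint (x - snd q) (fst q))"

definition minty_defect :: "'a::real_inner \<Rightarrow> ('a \<times> 'a) set \<Rightarrow> ('a \<times> 'a \<Rightarrow> real) \<Rightarrow> real" where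
  "minty_defect x S w = minty_pairing x S w - (norm (minty_center x S w))\<^sup>2"

definition minty_sup :: "'a::real_inner \<Rightarrow> ('a \<Rightarrow> 'a set) \<Rightarrow> real" where
  "minty_sup x A = (SUP (S, w) \<in> {(S, w). convex_weights A S w}. minty_defect x S w)"

lemma minty_sums_superset:
  assumes "finite T" "S \<subseteq> T" "\<forall>q. q \<notin> S \<longrightarrow> w q = 0"
  shows "minty_pairing x T w = minty_pairing x S w" "minty_center x T w = minty_center x S w"
  unfolding minty_pairing_def minty_center_def using assms
  by (auto intro!: sum.mono_neutral_right)

lemma minty_sums_linear:
  shows "minty_pairing x S (\<lambda>q. a * w q + b * w' q) = a * minty_pairing x S w + b * minty_pairing x S w'"
    and "minty_center x S (\<lambda>q. a * w q + b * w' q) = a *\<^sub>R minty_center x S w + b *\<^sub>R minty_center x S w'"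
  unfolding minty_pairing_def minty_center_def sum_distrib_left scaleR_sum_right sum.distrib[symmetric]
  by (rule sum.cong; simp add: algebra_simps)+

lemma power2_norm_convex_combination:
  fixes y1 y2 :: "'a::real_inner"
  shows "(norm ((1 - t) *\<^sub>R y1 + t *\<^sub>R y2))\<^sup>2 =
    (1 - t) * (norm y1)\<^sup>2 + t * (norm y2)\<^sup>2 - t * (1 - t) * (norm (y1 - y2))\<^sup>2"
  by (simp add: power2_norm_eq_inner inner_commute algebra_simps)

lemma convex_weights_mix:
  assumes "convex_weights A S w" "convex_weights A S' w'" "0 \<le> t" "t \<le> 1"
  shows "convex_weights A (S \<union> S') (\<lambda>q. (1 - t) * w q + t * w' q)"
proof -
  have fin: "finite (S \<union> S')" using assms(1,2) by (auto simp: convex_weights_def)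
  have "sum w (S \<union> S') = 1"
    using assms(1) fin by (subst sum.mono_neutral_right[of "S \<union> S'" S]) (auto simp: convex_weights_def)
  moreover have "sum w' (S \<union> S') = 1"
    using assms(2) fin by (subst sum.mono_neutral_right[of "S \<union> S'" S']) (auto simp: convex_weights_def)
  ultimately show ?thesis
    using assms fin unfolding convex_weights_def by (auto simp: sum.distrib sum_distrib_left[symmetric])
qed

lemma minty_defect_mix:
  assumes "convex_weights A S w" "convex_weights A S' w'"
  shows "minty_defect x (S \<union> S') (\<lambda>q. (1 - t) * w q + t * w' q) =
    (1 - t) * minty_defect x S w + t * minty_defect x S' w' +
    t * (1 - t) * (norm (minty_center x S w - minty_center x S' w'))\<^sup>2"
proof -
  have "finite (S \<union> S')" using assms by (auto simp: convex_weights_def)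
  then have "minty_pairing x (S \<union> S') w = minty_pairing x S w" "minty_center x (S \<union> S') w = minty_center x S w"
      "minty_pairing x (S \<union> S') w' = minty_pairing x S' w'" "minty_center x (S \<union> S') w' = minty_center x S' w'"
    using assms by (intro minty_sums_superset; auto simp: convex_weights_def)+
  then show ?thesis
    unfolding minty_defect_def minty_sums_linear power2_norm_convex_combination by (simp add: algebra_simps)
qed

lemma convex_weights_single:
  assumes "u \<in> A z"
  shows "convex_weights A {(z, u)} (\<lambda>q. if q = (z, u) then 1 else 0)"
  using assms by (simp add: convex_weights_def)

lemma minty_single_pair:
  shows "minty_center x {(z, u)} (\<lambda>q. if q = (z, u) then 1 else 0) = midpoint (x - u) z"
    and "minty_defect x {(z, u)} (\<lambda>q. if q = (z, u) then 1 else 0) = (x - u) \<bullet> z - (norm (midpoint (x - u) z))\<^sup>2"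
  by (simp_all add: minty_defect_def minty_pairing_def minty_center_def)

lemma sum_pairwise_inner_diff:
  fixes a b :: "'i \<Rightarrow> 'a::real_inner"
  assumes "sum w S = 1"
  shows "(\<Sum>q\<in>S. \<Sum>r\<in>S. w q * w r * ((a q - a r) \<bullet> (b q - b r))) =
    2 * ((\<Sum>q\<in>S. w q * (a q \<bullet> b q)) - (\<Sum>q\<in>S. w q *\<^sub>R a q) \<bullet> (\<Sum>q\<in>S. w q *\<^sub>R b q))"
proof -
  have diag: "(\<Sum>q\<in>S. \<Sum>r\<in>S. w q * w r * (a q \<bullet> b q)) = (\<Sum>q\<in>S. w q * (a q \<bullet> b q))"
    by (simp add: sum_distrib_right[symmetric] sum_distrib_left[symmetric] assms mult.commute mult.left_commute)
  have cross: "(\<Sum>q\<in>S. \<Sum>r\<in>S. w q * w r * (a r \<bullet> b q)) = (\<Sum>q\<in>S. w q *\<^sub>R a q) \<bullet> (\<Sum>q\<in>S. w q *\<^sub>R b q)"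
    by (simp add: inner_sum_left inner_sum_right sum_distrib_left mult.assoc)
  have "(\<Sum>q\<in>S. \<Sum>r\<in>S. w q * w r * ((a q - a r) \<bullet> (b q - b r))) =
      (\<Sum>q\<in>S. \<Sum>r\<in>S. w q * w r * (a q \<bullet> b q)) + (\<Sum>q\<in>S. \<Sum>r\<in>S. w r * w q * (a r \<bullet> b r))
      - (\<Sum>q\<in>S. \<Sum>r\<in>S. w q * w r * (a r \<bullet> b q)) - (\<Sum>q\<in>S. \<Sum>r\<in>S. w r * w q * (a q \<bullet> b r))"
    by (simp add: algebra_simps sum.distrib sum_subtractf)
  also have "\<dots> = 2 * (\<Sum>q\<in>S. \<Sum>r\<in>S. w q * w r * (a q \<bullet> b q)) - 2 * (\<Sum>q\<in>S. \<Sum>r\<in>S. w q * w r * (a r \<bullet> b q))"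
    by (subst (2 4) sum.swap) simp
  finally show ?thesis unfolding diag cross by simp
qed

lemma minty_defect_nonpos:
  assumes "monotone_op A" "convex_weights A S w"
  shows "minty_defect x S w \<le> 0"
proof -
  define a where "a q = x - snd q" for q :: "'a \<times> 'a"
  define ab where "ab = (\<Sum>q\<in>S. w q *\<^sub>R a q)"
  define zb where "zb = (\<Sum>q\<in>S. w q *\<^sub>R fst q)"
  have S: "sum w S = 1" "\<And>q. 0 \<le> w q" "\<And>q. q \<in> S \<Longrightarrow> snd q \<in> A (fst q)"
    using assms(2) by (auto simp: convex_weights_def)
  have "(\<Sum>q\<in>S. \<Sum>r\<in>S. w q * w r * ((a q - a r) \<bullet> (fst q - fst r))) \<le> 0"
  proof (intro sum_nonpos)
    fix q r assume "q \<in> S" "r \<in> S"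
    then have "0 \<le> (snd q - snd r) \<bullet> (fst q - fst r)"
      using assms(1) S(3) unfolding monotone_op_def by blast
    then have "(a q - a r) \<bullet> (fst q - fst r) \<le> 0"
      unfolding a_def by (simp add: algebra_simps)
    then show "w q * w r * ((a q - a r) \<bullet> (fst q - fst r)) \<le> 0"
      using S(2) by (simp add: mult_nonneg_nonpos)
  qed
  then have "minty_pairing x S w \<le> ab \<bullet> zb"
    unfolding sum_pairwise_inner_diff[OF S(1)] minty_pairing_def ab_def zb_def a_def by simp
  moreover have "ab \<bullet> zb \<le> (norm (midpoint ab zb))\<^sup>2"
    using zero_le_power2[of "norm (ab - zb)"]
    by (simp add: midpoint_def power2_norm_eq_inner inner_commute algebra_simps)
  moreover have "minty_center x S w = midpoint ab zb"
    unfolding minty_center_def ab_def zb_def a_def midpoint_def scaleR_sum_right sum.distrib[symmetric]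
    by (rule sum.cong) (simp_all add: algebra_simps)
  ultimately show ?thesis by (simp add: minty_defect_def)
qed

lemma bdd_above_minty_defects:
  assumes "monotone_op A"
  shows "bdd_above ((\<lambda>(S, w). minty_defect x S w) ` {(S, w). convex_weights A S w})"
  by (rule bdd_aboveI[of _ 0]) (use minty_defect_nonpos[OF assms] in auto)

lemma minty_defect_le_sup:
  assumes "monotone_op A" "convex_weights A S w"
  shows "minty_defect x S w \<le> minty_sup x A"
  using cSUP_upper[of "(S, w)", OF _ bdd_above_minty_defects[OF assms(1)]] assms(2)
  by (simp add: minty_sup_def)

lemma minty_sup_nonpos:
  assumes "monotone_op A" "u \<in> A z"
  shows "minty_sup x A \<le> 0"
  unfolding minty_sup_def using convex_weights_single[of u A z, OF assms(2)] minty_defect_nonpos[OF assms(1)]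
  by (intro cSUP_least) auto

lemma minty_sup_approx:
  assumes "monotone_op A" "u \<in> A z" "e > 0"
  obtains S w where "convex_weights A S w" "minty_sup x A - e < minty_defect x S w"
proof -
  have ne: "{(S, w). convex_weights A S w} \<noteq> {}"
    using convex_weights_single[of u A z, OF assms(2)] by blast
  have "minty_sup x A - e < minty_sup x A"
    using assms(3) by simp
  then have "\<exists>q\<in>{(S, w). convex_weights A S w}. minty_sup x A - e < (case q of (S, w) \<Rightarrow> minty_defect x S w)"
    unfolding minty_sup_def less_cSUP_iff[OF ne bdd_above_minty_defects[OF assms(1)]] .
  then show ?thesis using that by auto
qed

lemma minty_centers_close:
  assumes "monotone_op A" "convex_weights A S w" "convex_weights A S' w'"
  shows "(norm (minty_center x S w - minty_center x S' w'))\<^sup>2 \<le>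
    4 * (minty_sup x A - (minty_defect x S w + minty_defect x S' w') / 2)"
proof -
  have "minty_defect x (S \<union> S') (\<lambda>q. (1 - 1/2) * w q + 1/2 * w' q) \<le> minty_sup x A"
    by (intro minty_defect_le_sup assms(1) convex_weights_mix assms(2,3)) auto
  then show ?thesis
    unfolding minty_defect_mix[OF assms(2,3)] by (simp add: field_simps)
qed

lemma inner_diff_diff_eq_midpoint:
  fixes y a b :: "'a::real_inner"
  shows "(y - a) \<bullet> (y - b) = (norm (y - midpoint a b))\<^sup>2 + (a \<bullet> b - (norm (midpoint a b))\<^sup>2)"
  by (simp add: midpoint_def power2_norm_eq_inner inner_commute algebra_simps)

lemma minty_single_mix_bound:
  fixes x :: "'a::real_inner"
  assumes "monotone_op A" "convex_weights A S w" "u \<in> A z" "0 \<le> t" "t \<le> 1"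
  defines "Y \<equiv> minty_center x S w" and "h \<equiv> minty_defect x S w"
  shows "t * ((Y - (x - u)) \<bullet> (Y - z) - h) \<le> (minty_sup x A - h) + t\<^sup>2 * (norm (Y - midpoint (x - u) z))\<^sup>2"
proof -
  let ?w = "\<lambda>r. (1 - t) * w r + t * (if r = (z, u) then 1 else 0)"
  note single = convex_weights_single[of u A z, OF assms(3)]
  have "minty_defect x (S \<union> {(z, u)}) ?w \<le> minty_sup x A"
    by (rule minty_defect_le_sup[OF assms(1) convex_weights_mix[OF assms(2) single assms(4,5)]])
  moreover have "minty_defect x (S \<union> {(z, u)}) ?w = (1 - t) * h + t * ((x - u) \<bullet> z - (norm (midpoint (x - u) z))\<^sup>2) +
      t * (1 - t) * (norm (Y - midpoint (x - u) z))\<^sup>2"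
    unfolding minty_defect_mix[OF assms(2) single] minty_single_pair Y_def h_def ..
  moreover have "t * ((M + c) - h) \<le> (H - h) + t\<^sup>2 * M"
    if "(1 - t) * h + t * c + t * (1 - t) * M \<le> H" for c M H :: real
    using that by (simp add: algebra_simps power2_eq_square)
  ultimately show ?thesis
    unfolding inner_diff_diff_eq_midpoint by simp
qed

lemma minty_maximizing_sequence:
  fixes A :: "'a::{real_inner, complete_space} \<Rightarrow> 'a set"
  assumes mono: "monotone_op A" and "u0 \<in> A z0"
  obtains S w y where "\<And>n. convex_weights A (S n) (w n)"
    "(\<lambda>n. minty_defect x (S n) (w n)) \<longlonglongrightarrow> minty_sup x A" "(\<lambda>n. minty_center x (S n) (w n)) \<longlonglongrightarrow> y"
proof -
  define H where "H = minty_sup x A"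
  have "\<exists>S w. convex_weights A S w \<and> H - 1 / Suc n < minty_defect x S w" for n
    unfolding H_def by (rule minty_sup_approx[OF mono assms(2), of "1 / Suc n" x]) auto
  then obtain S w where S: "\<And>n. convex_weights A (S n) (w n)"
    and near_sup: "\<And>n. H - 1 / Suc n < minty_defect x (S n) (w n)"
    by metis
  define Y where "Y n = minty_center x (S n) (w n)" for n
  have "Cauchy Y"
  proof (rule metric_CauchyI)
    fix e :: real assume "e > 0"
    then obtain N where N: "1 / Suc N < e\<^sup>2 / 4"
      by (metis nat_approx_posE zero_less_divide_iff zero_less_numeral zero_less_power)
    have "dist (Y m) (Y n) < e" if "N \<le> m" "N \<le> n" for m n
    proof -
      have "1 / Suc m \<le> 1 / Suc N" "1 / Suc n \<le> 1 / Suc N"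
        using that by (simp_all add: frac_le)
      then have "(norm (Y m - Y n))\<^sup>2 < e\<^sup>2"
        using minty_centers_close[OF mono S S, of x m n] near_sup[of m] near_sup[of n] N
        unfolding Y_def H_def by argo
      then show ?thesis
        using \<open>e > 0\<close> by (simp add: dist_norm power2_less_imp_less)
    qed
    then show "\<exists>N. \<forall>m\<ge>N. \<forall>n\<ge>N. dist (Y m) (Y n) < e" by blast
  qed
  then obtain y where "Y \<longlonglongrightarrow> y"
    using Cauchy_convergent_iff convergent_def by blast
  moreover have "(\<lambda>n. minty_defect x (S n) (w n)) \<longlonglongrightarrow> H"
  proof (rule tendsto_sandwich)
    show "\<forall>\<^sub>F n in sequentially. H - 1 / Suc n \<le> minty_defect x (S n) (w n)"
      using near_sup by (simp add: less_imp_le)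
    show "\<forall>\<^sub>F n in sequentially. minty_defect x (S n) (w n) \<le> H"
      unfolding H_def using minty_defect_le_sup[OF mono S] by simp
    show "(\<lambda>n. H - 1 / Suc n) \<longlonglongrightarrow> H"
      using tendsto_diff[OF tendsto_const LIMSEQ_inverse_real_of_nat, of H] by (simp add: inverse_eq_divide)
  qed simp
  ultimately show thesis
    using that S unfolding Y_def H_def by blast
qed

lemma nonpos_if_mult_le_power2:
  fixes c M :: real
  assumes "\<And>t. 0 < t \<Longrightarrow> t \<le> 1 \<Longrightarrow> t * c \<le> t\<^sup>2 * M"
  shows "c \<le> 0"
proof -
  have "\<forall>\<^sub>F t in at_right 0. c \<le> t * M"
    using eventually_at_right_real[OF zero_less_one]
  proof eventually_elim
    case (elim t)
    then have "t * c \<le> t * (t * M)"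
      using assms[of t] by (simp add: power2_eq_square mult.assoc)
    then show ?case using elim by simp
  qed
  then show ?thesis
    by (rule tendsto_lowerbound[rotated]) (auto intro: tendsto_eq_intros)
qed

lemma minty_variational_inequality:
  fixes A :: "'a::{real_inner, complete_space} \<Rightarrow> 'a set"
  assumes mono: "monotone_op A" and "u0 \<in> A z0"
  shows "\<exists>y. \<forall>z u. u \<in> A z \<longrightarrow> 0 \<le> (x - y - u) \<bullet> (y - z)"
proof -
  obtain S w y where S: "\<And>n. convex_weights A (S n) (w n)"
    and h_lim: "(\<lambda>n. minty_defect x (S n) (w n)) \<longlonglongrightarrow> minty_sup x A"
    and Y_lim: "(\<lambda>n. minty_center x (S n) (w n)) \<longlonglongrightarrow> y"
    by (rule minty_maximizing_sequence[OF assms, of x]) blast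
  define Y h H where "Y n = minty_center x (S n) (w n)" and "h n = minty_defect x (S n) (w n)"
    and "H = minty_sup x A" for n
  have "0 \<le> (x - y - u) \<bullet> (y - z)" if "u \<in> A z" for z u
  proof -
    have "t * ((y - (x - u)) \<bullet> (y - z) - H) \<le> t\<^sup>2 * (norm (y - midpoint (x - u) z))\<^sup>2"
      if "0 < t" "t \<le> 1" for t
    proof -
      have "t * ((y - (x - u)) \<bullet> (y - z) - H) \<le> (H - H) + t\<^sup>2 * (norm (y - midpoint (x - u) z))\<^sup>2"
      proof (rule LIMSEQ_le)
        show "(\<lambda>n. t * ((Y n - (x - u)) \<bullet> (Y n - z) - h n)) \<longlonglongrightarrow> t * ((y - (x - u)) \<bullet> (y - z) - H)"
          using Y_lim h_lim unfolding Y_def h_def H_def by (intro tendsto_intros)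
        show "(\<lambda>n. (H - h n) + t\<^sup>2 * (norm (Y n - midpoint (x - u) z))\<^sup>2)
            \<longlonglongrightarrow> (H - H) + t\<^sup>2 * (norm (y - midpoint (x - u) z))\<^sup>2"
          using Y_lim h_lim unfolding Y_def h_def H_def by (intro tendsto_intros)
        show "\<exists>N. \<forall>n\<ge>N. t * ((Y n - (x - u)) \<bullet> (Y n - z) - h n) \<le> (H - h n) + t\<^sup>2 * (norm (Y n - midpoint (x - u) z))\<^sup>2"
          using minty_single_mix_bound[OF mono S \<open>u \<in> A z\<close>] that unfolding Y_def h_def H_def by auto
      qed
      then show ?thesis by simp
    qed
    then have "(y - (x - u)) \<bullet> (y - z) - H \<le> 0"
      by (rule nonpos_if_mult_le_power2)
    moreover have "H \<le> 0"
      unfolding H_def by (rule minty_sup_nonpos[OF mono assms(2)])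
    ultimately show ?thesis
      by (simp add: algebra_simps)
  qed
  then show ?thesis by blast
qed

lemma maximal_monotone_graph_nonempty:
  fixes A :: "'a::real_inner \<Rightarrow> 'a set"
  assumes "maximal_monotone A"
  obtains z u where "u \<in> A z"
proof (rule ccontr)
  assume "\<not> thesis"
  then have empty: "A z = {}" for z using that by blast
  define B :: "'a \<Rightarrow> 'a set" where "B z = (if z = 0 then {0} else {})" for z
  have "monotone_op B" unfolding monotone_op_def B_def by auto
  then have "B = A" using assms empty unfolding maximal_monotone_def by blast
  moreover have "0 \<in> B 0" unfolding B_def by simp
  ultimately show False using empty by simp
qed

lemma maximal_monotone_memI:
  assumes "maximal_monotone A" and w: "\<And>z u. u \<in> A z \<Longrightarrow> 0 \<le> (w - u) \<bullet> (y - z)"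
  shows "w \<in> A y"
proof -
  define B where "B z = A z \<union> (if z = y then {w} else {})" for z
  have mono: "monotone_op A" using assms(1) unfolding maximal_monotone_def by simp
  have flip: "(a - b) \<bullet> (c - d) = (b - a) \<bullet> (d - c)" for a b c d :: 'a
    by (simp add: algebra_simps)
  have "0 \<le> (u - v) \<bullet> (z - z')" if uv: "u \<in> B z" "v \<in> B z'" for z z' u v
  proof -
    have "u \<in> A z \<or> z = y \<and> u = w" "v \<in> A z' \<or> z' = y \<and> v = w"
      using uv unfolding B_def by (simp_all split: if_splits)
    then consider "u \<in> A z" "v \<in> A z'" | "u \<in> A z" "z' = y" "v = w" | "z = y" "u = w" "v \<in> A z'"
      | "z = y" "u = w" "z' = y" "v = w"
      by blast
    then show ?thesis
    proof cases
      case 1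
      then show ?thesis using mono unfolding monotone_op_def by blast
    next
      case 2
      then show ?thesis using w[of u z] flip[of u w z y] by simp
    next
      case 3
      then show ?thesis using w[of v z'] by simp
    qed simp
  qed
  then have "monotone_op B" unfolding monotone_op_def by blast
  moreover have "\<forall>z. A z \<subseteq> B z" unfolding B_def by blast
  ultimately have "B = A" using assms(1) unfolding maximal_monotone_def by blast
  moreover have "w \<in> B y" unfolding B_def by simp
  ultimately show ?thesis by simp
qed

lemma monotone_op_scaleR:
  assumes "monotone_op A" "0 \<le> c"
  shows "monotone_op (\<lambda>z. (\<lambda>u. c *\<^sub>R u) ` A z)"
  using assms unfolding monotone_op_def by (auto simp flip: scaleR_diff_right)

theorem minty_surjectivity:
  fixes A :: "'a::{real_inner, complete_space} \<Rightarrow> 'a set"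
  assumes mm: "maximal_monotone A" and "0 < lam"
  shows "\<exists>y. \<exists>u\<in>A y. x = y + lam *\<^sub>R u"
proof -
  have mono: "monotone_op A" using mm unfolding maximal_monotone_def by simp
  obtain z0 u0 where "u0 \<in> A z0" using maximal_monotone_graph_nonempty[OF mm] .
  then obtain y where y: "\<And>z v. v \<in> (\<lambda>u. lam *\<^sub>R u) ` A z \<Longrightarrow> 0 \<le> (x - y - v) \<bullet> (y - z)"
    using minty_variational_inequality[OF monotone_op_scaleR[OF mono], of lam "lam *\<^sub>R u0" z0 x]
      \<open>0 < lam\<close> by auto
  define w where "w = (1 / lam) *\<^sub>R (x - y)"
  have "x - y - lam *\<^sub>R u = lam *\<^sub>R (w - u)" for u
    unfolding w_def using \<open>0 < lam\<close> by (simp add: algebra_simps)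
  then have "0 \<le> (w - u) \<bullet> (y - z)" if "u \<in> A z" for z u
    using y[of "lam *\<^sub>R u" z] that \<open>0 < lam\<close> by (simp add: zero_le_mult_iff)
  then have "w \<in> A y" by (rule maximal_monotone_memI[OF mm])
  moreover have "x = y + lam *\<^sub>R w" unfolding w_def using \<open>0 < lam\<close> by simp
  ultimately show ?thesis by blast
qed

section \<open>Resolvents\<close>

lemma resolvent_eqI:
  assumes "monotone_op A" "0 < lam" "u \<in> A y" "x = y + lam *\<^sub>R u"
  shows "resolvent lam A x = y"
  unfolding resolvent_def
proof (rule the_equality)
  show "\<exists>u\<in>A y. x = y + lam *\<^sub>R u" using assms(3,4) by blast
next
  fix y' assume "\<exists>u'\<in>A y'. x = y' + lam *\<^sub>R u'"
  then obtain u' where u': "u' \<in> A y'" "x = y' + lam *\<^sub>R u'" by blast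
  have "y' - y = lam *\<^sub>R (u - u')" using assms(4) u'(2) by (simp add: algebra_simps)
  moreover have "0 \<le> (u' - u) \<bullet> (y' - y)" using assms(1,3) u'(1) unfolding monotone_op_def by blast
  moreover have "(u' - u) \<bullet> (u - u') = - (norm (u - u'))\<^sup>2"
    by (metis inner_minus_left minus_diff_eq power2_norm_eq_inner)
  ultimately have "lam * (norm (u - u'))\<^sup>2 \<le> 0"
    by simp
  then show "y' = y" using \<open>y' - y = _\<close> \<open>0 < lam\<close> by (simp add: mult_le_0_iff)
qed

lemma resolvent_inclusion:
  fixes A :: "'a::{real_inner, complete_space} \<Rightarrow> 'a set"
  assumes "maximal_monotone A" "0 < lam"
  shows "\<exists>u\<in>A (resolvent lam A x). x = resolvent lam A x + lam *\<^sub>R u"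
proof -
  obtain y u where "u \<in> A y" "x = y + lam *\<^sub>R u"
    using minty_surjectivity[OF assms] by blast
  moreover have "monotone_op A" using assms(1) unfolding maximal_monotone_def by simp
  ultimately show ?thesis using resolvent_eqI[OF _ assms(2)] by metis
qed

lemma resolvent_residual_nonexpansive:
  fixes A :: "'a::{real_inner, complete_space} \<Rightarrow> 'a set"
  assumes mm: "maximal_monotone A" and "0 < lam"
  shows "norm ((y - resolvent lam A y) - (y' - resolvent lam A y')) \<le> norm (y - y')"
proof -
  define J J' where "J = resolvent lam A y" and "J' = resolvent lam A y'"
  obtain u u' where u: "u \<in> A J" "y = J + lam *\<^sub>R u" and u': "u' \<in> A J'" "y' = J' + lam *\<^sub>R u'"
    using resolvent_inclusion[OF mm \<open>0 < lam\<close>] unfolding J_def J'_def by metis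
  define d where "d = (y - J) - (y' - J')"
  have "0 \<le> (u - u') \<bullet> (J - J')"
    using mm u u' unfolding maximal_monotone_def monotone_op_def by blast
  moreover have "d = lam *\<^sub>R (u - u')" unfolding d_def using u u' by (simp add: algebra_simps)
  ultimately have "0 \<le> d \<bullet> (J - J')" using \<open>0 < lam\<close> by simp
  moreover have "J - J' = (y - y') - d" unfolding d_def by simp
  ultimately have "(norm d)\<^sup>2 \<le> d \<bullet> (y - y')" by (simp add: inner_diff_right power2_norm_eq_inner)
  also have "\<dots> \<le> norm d * norm (y - y')" by (rule norm_cauchy_schwarz)
  finally have "norm d \<le> norm (y - y')"
    by (metis mult_le_cancel_left_pos norm_ge_zero order_le_less power2_eq_square)
  then show ?thesis unfolding d_def J_def J'_def .
qed

lemma norm_resolvent_residual_mono: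
  fixes A :: "'a::{real_inner, complete_space} \<Rightarrow> 'a set"
  assumes mm: "maximal_monotone A" and "0 < lam" "lam \<le> mu"
  shows "norm (y - resolvent lam A y) \<le> norm (y - resolvent mu A y)"
proof -
  have "0 < mu" using assms by simp
  define J J' where "J = resolvent lam A y" and "J' = resolvent mu A y"
  obtain u u' where u: "u \<in> A J" "y = J + lam *\<^sub>R u" and u': "u' \<in> A J'" "y = J' + mu *\<^sub>R u'"
    using resolvent_inclusion[OF mm \<open>0 < lam\<close>] resolvent_inclusion[OF mm \<open>0 < mu\<close>]
    unfolding J_def J'_def by metis
  have "0 \<le> (u - u') \<bullet> (J - J')"
    using mm u u' unfolding maximal_monotone_def monotone_op_def by blast
  moreover have "J - J' = mu *\<^sub>R u' - lam *\<^sub>R u"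
    using u u' by (simp add: algebra_simps)
  ultimately have "lam * (u \<bullet> u) + mu * (u' \<bullet> u') \<le> (lam + mu) * (u \<bullet> u')"
    by (simp add: inner_commute algebra_simps)
  also have "\<dots> \<le> (lam + mu) * (norm u * norm u')"
    using \<open>0 < lam\<close> \<open>0 < mu\<close> by (intro mult_left_mono norm_cauchy_schwarz) auto
  finally have product: "(norm u - norm u') * (lam * norm u - mu * norm u') \<le> 0"
    by (simp add: power2_norm_eq_inner[symmetric] power2_eq_square algebra_simps)
  have "lam * norm u \<le> mu * norm u'"
  proof (rule ccontr)
    assume contra: "\<not> lam * norm u \<le> mu * norm u'"
    moreover have "lam * norm u' \<le> mu * norm u'"
      using \<open>lam \<le> mu\<close> by (simp add: mult_right_mono)
    ultimately have "norm u' < norm u"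
      using \<open>0 < lam\<close> by (metis mult_less_cancel_left_pos not_le order_le_less_trans)
    then show False
      using product contra mult_pos_pos[of "norm u - norm u'" "lam * norm u - mu * norm u'"] by linarith
  qed
  moreover have "y - J = lam *\<^sub>R u" "y - J' = mu *\<^sub>R u'"
    using u(2) u'(2) by (metis add_diff_cancel_left')+
  ultimately show ?thesis
    using \<open>0 < lam\<close> \<open>0 < mu\<close> unfolding J_def J'_def by simp
qed

text \<open>On the level set the larger step has the smaller residual, while at a fixed point the residual grows
  with the step; the residual at the larger step is thus squeezed between the other two, and the
  nonexpansiveness of \<open>I - J\<^sub>\<mu>\<close> bounds the gap.\<close>

lemma abs_resolvent_residual_diff_le:
  fixes A :: "'a::{real_inner, complete_space} \<Rightarrow> 'a set"
  assumes mm: "maximal_monotone A" and "0 < lam" "lam \<le> mu"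
    and "lam * norm (resolvent lam A y - y) ^ k = \<theta>" "mu * norm (resolvent mu A y' - y') ^ k = \<theta>"
  shows "\<bar>norm (resolvent mu A y' - y') - norm (resolvent lam A y - y)\<bar> \<le> norm (y' - y)"
proof -
  define r where "r l z = norm (resolvent l A z - z)" for l z
  have le_mono: "r lam y \<le> r mu y"
    using norm_resolvent_residual_mono[OF mm assms(2,3)] unfolding r_def by (simp add: norm_minus_commute)
  have nonexp: "\<bar>r mu y' - r mu y\<bar> \<le> norm (y' - y)"
    using norm_triangle_ineq3[of "y' - resolvent mu A y'" "y - resolvent mu A y"]
      resolvent_residual_nonexpansive[OF mm, of mu y' y] assms(2,3)
    unfolding r_def by (simp add: norm_minus_commute)
  consider "k = 0" | "k > 0" by blast
  then have "\<bar>r mu y' - r lam y\<bar> \<le> norm (y' - y)"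
  proof cases
    case 1
    then have "mu = lam" using assms(4,5) by simp
    then show ?thesis using nonexp by simp
  next
    case 2
    have "0 \<le> \<theta>" using assms(2,4) by (metis norm_ge_zero zero_le_mult_iff zero_le_power less_le)
    then have "\<theta> / mu \<le> \<theta> / lam" using assms(2,3) by (simp add: frac_le)
    moreover have "r mu y' ^ k = \<theta> / mu" "r lam y ^ k = \<theta> / lam"
      using assms(2-5) unfolding r_def by (auto simp: field_simps)
    ultimately have "r mu y' ^ k \<le> r lam y ^ k" by simp
    moreover have "0 \<le> r mu y'" "0 \<le> r lam y" unfolding r_def by simp_all
    ultimately have "r mu y' \<le> r lam y"
      using power_mono_iff[of "r mu y'" "r lam y" k] 2 by simp
    then show ?thesis using le_mono nonexp by linarith
  qed
  then show ?thesis unfolding r_def .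
qed

lemma resolvent_residual_lipschitz_on_level_set:
  fixes A :: "'a::{real_inner, complete_space} \<Rightarrow> 'a set"
  assumes "maximal_monotone A" "0 < lam" "0 < mu"
    and "lam * norm (resolvent lam A y - y) ^ k = \<theta>" "mu * norm (resolvent mu A y' - y') ^ k = \<theta>"
  shows "\<bar>norm (resolvent mu A y' - y') - norm (resolvent lam A y - y)\<bar> \<le> norm (y' - y)"
proof (cases "lam \<le> mu")
  case True
  then show ?thesis using abs_resolvent_residual_diff_le[OF assms(1,2) _ assms(4,5)] by blast
next
  case False
  then show ?thesis
    using abs_resolvent_residual_diff_le[OF assms(1,3) _ assms(5,4)]
    by (simp add: abs_minus_commute norm_minus_commute)
qed

section \<open>Lipschitz functions are differentiable almost everywhere\<close>

lemma frequently_at_left_realE: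
  fixes t :: real
  assumes "\<exists>\<^sub>F y in at_left t. P y" "0 < d"
  obtains y where "t - d < y" "y < t" "P y"
proof -
  have "\<exists>\<^sub>F y in at_left t. y \<in> {t - d<..<t} \<and> P y"
    using frequently_eventually_conj[OF assms(1) eventually_at_left_real] assms(2) by simp
  then show thesis using that by (auto dest: frequently_ex)
qed

lemma frequently_at_right_realE:
  fixes t :: real
  assumes "\<exists>\<^sub>F y in at_right t. P y" "0 < d"
  obtains y where "t < y" "y < t + d" "P y"
proof -
  have "\<exists>\<^sub>F y in at_right t. y \<in> {t<..<t + d} \<and> P y"
    using frequently_eventually_conj[OF assms(1) eventually_at_right_real] assms(2) by simp
  then show thesis using that by (auto dest: frequently_ex)
qed

lemma vitali_interval_cover:
  fixes E U :: "real set"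
  assumes "open U" "E \<subseteq> U"
    and small: "\<And>t d. t \<in> E \<Longrightarrow> 0 < d \<Longrightarrow> \<exists>l u. l < u \<and> t \<in> {l..u} \<and> {l..u} \<subseteq> ball t d \<and> P l u"
  obtains C where "countable C" "\<And>l u. (l, u) \<in> C \<Longrightarrow> l < u \<and> {l..u} \<subseteq> U \<and> P l u"
    "disjoint_family_on (\<lambda>(l, u). {l..u}) C" "negligible (E - (\<Union>(l, u)\<in>C. {l..u}))"
proof -
  define K where "K = {(l, u). l < u \<and> {l..u} \<subseteq> U \<and> P l u}"
  define c \<rho> where "c i = (fst i + snd i) / 2" and "\<rho> i = (snd i - fst i) / 2" for i :: "real \<times> real"
  have cball: "cball (c i) (\<rho> i) = {fst i..snd i}" for i
    unfolding c_def \<rho>_def cball_eq_atLeastAtMost by (simp add: field_simps)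
  have cover: "\<exists>i. i \<in> K \<and> t \<in> cball (c i) (\<rho> i) \<and> \<rho> i < d" if "t \<in> E" "0 < d" for t d
  proof -
    obtain e where "0 < e" "ball t e \<subseteq> U" using assms(1,2) \<open>t \<in> E\<close> open_contains_ball by blast
    then obtain l u where lu: "l < u" "t \<in> {l..u}" "{l..u} \<subseteq> ball t (min d e)" "P l u"
      using small[OF \<open>t \<in> E\<close>, of "min d e"] \<open>0 < d\<close> by auto
    have "{l..u} \<subseteq> U" using lu(3) \<open>ball t e \<subseteq> U\<close> subset_ball[of "min d e" e t] by auto
    moreover have "u - l < 2 * d"
      using lu(1,2) subsetD[OF lu(3), of l] subsetD[OF lu(3), of u] by (auto simp: dist_real_def)
    moreover have "t \<in> cball (c (l, u)) (\<rho> (l, u))"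
      using lu(2) cball[of "(l, u)"] by simp
    ultimately show ?thesis
      using lu by (intro exI[of _ "(l, u)"]) (auto simp: K_def \<rho>_def)
  qed
  have pos: "0 < \<rho> i" if "i \<in> K" for i using that by (auto simp: K_def \<rho>_def)
  obtain C where C: "countable C" "C \<subseteq> K"
      "pairwise (\<lambda>i j. disjnt (cball (c i) (\<rho> i)) (cball (c j) (\<rho> j))) C"
      "negligible (E - (\<Union>i\<in>C. cball (c i) (\<rho> i)))"
    by (rule Vitali_covering_theorem_cballs[OF pos cover])
  show thesis
  proof (rule that[OF C(1)])
    show "l < u \<and> {l..u} \<subseteq> U \<and> P l u" if "(l, u) \<in> C" for l u
      using C(2) that unfolding K_def by auto
    show "disjoint_family_on (\<lambda>(l, u). {l..u}) C"
      using C(3) unfolding cball disjoint_family_on_def pairwise_def disjnt_def by (auto simp: case_prod_beta)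
    have "(\<Union>(l, u)\<in>C. {l..u}) = (\<Union>i\<in>C. cball (c i) (\<rho> i))"
      unfolding cball by (auto simp: case_prod_beta)
    then show "negligible (E - (\<Union>(l, u)\<in>C. {l..u}))"
      using C(4) by simp
  qed
qed

lemma strict_mono_on_image_Icc:
  fixes g :: "real \<Rightarrow> real"
  assumes "strict_mono_on I g" "continuous_on I g" "{l..u} \<subseteq> I" "l \<le> u"
  shows "g ` {l..u} = {g l..g u}"
proof
  have "mono_on {l..u} g"
    using monotone_on_subset[OF assms(1,3)] by (rule strict_mono_on_imp_mono_on)
  then show "g ` {l..u} \<subseteq> {g l..g u}"
    using assms(4) by (auto simp: mono_on_def)
  show "{g l..g u} \<subseteq> g ` {l..u}"
    using IVT'[of g l _ u] continuous_on_subset[OF assms(2,3)] assms(4) by fastforce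
qed

lemma emeasure_image_Union_intervals:
  fixes g :: "real \<Rightarrow> real"
  assumes mono: "strict_mono_on I g" and cont: "continuous_on I g" and "countable C"
    and C: "\<And>l u. (l, u) \<in> C \<Longrightarrow> l \<le> u \<and> {l..u} \<subseteq> I"
    and disj: "disjoint_family_on (\<lambda>(l, u). {l..u}) C"
  shows "emeasure lebesgue (g ` (\<Union>(l, u)\<in>C. {l..u})) = (\<integral>\<^sup>+(l, u). ennreal (g u - g l) \<partial>count_space C)"
    and "g ` (\<Union>(l, u)\<in>C. {l..u}) \<in> sets lebesgue"
proof -
  define G where "G = (\<lambda>(l, u). g ` {l..u})"
  have image: "G (l, u) = {g l..g u}" "g l \<le> g u" if "(l, u) \<in> C" for l u
  proof -
    show "G (l, u) = {g l..g u}"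
      unfolding G_def using strict_mono_on_image_Icc[OF mono cont] C[OF that] by simp
    have "l \<in> I" "u \<in> I" "l \<le> u" using C[OF that] by auto
    then show "g l \<le> g u" by (rule mono_onD[OF strict_mono_on_imp_mono_on[OF mono]])
  qed
  have inj: "inj_on g (\<Union>(l, u)\<in>C. {l..u})"
    by (rule strict_mono_on_imp_inj_on[OF monotone_on_subset[OF mono]]) (use C in force)
  have "disjoint_family_on G C"
    unfolding disjoint_family_on_def
  proof (intro ballI impI)
    fix i j assume ij: "i \<in> C" "j \<in> C" "i \<noteq> j"
    obtain l u l' u' where [simp]: "i = (l, u)" "j = (l', u')" by fastforce
    have "{l..u} \<inter> {l'..u'} = {}"
      using disj ij unfolding disjoint_family_on_def by fastforce
    moreover have "g ` ({l..u} \<inter> {l'..u'}) = g ` {l..u} \<inter> g ` {l'..u'}"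
      by (rule inj_on_image_Int[OF inj]) (use ij in auto)
    ultimately show "G i \<inter> G j = {}" unfolding G_def by simp
  qed
  then have "emeasure lebesgue (\<Union>(G ` C)) = (\<integral>\<^sup>+i. emeasure lebesgue (G i) \<partial>count_space C)"
    using \<open>countable C\<close> image(1) by (intro emeasure_UN_countable) auto
  also have "\<dots> = (\<integral>\<^sup>+(l, u). ennreal (g u - g l) \<partial>count_space C)"
    using image by (intro nn_integral_cong) auto
  finally show "emeasure lebesgue (g ` (\<Union>(l, u)\<in>C. {l..u})) = (\<integral>\<^sup>+(l, u). ennreal (g u - g l) \<partial>count_space C)"
    unfolding G_def image_UN by (simp add: case_prod_beta)
  have "\<Union>(G ` C) \<in> sets lebesgue"
    using \<open>countable C\<close> image(1) by (intro sets.countable_UN'') auto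
  then show "g ` (\<Union>(l, u)\<in>C. {l..u}) \<in> sets lebesgue"
    unfolding G_def image_UN by (simp add: case_prod_beta)
qed

lemma emeasure_image_Union_intervals_le:
  fixes g :: "real \<Rightarrow> real"
  assumes "strict_mono_on I g" "continuous_on I g" "countable C" "0 \<le> c"
    and C: "\<And>l u. (l, u) \<in> C \<Longrightarrow> l \<le> u \<and> {l..u} \<subseteq> I \<and> g u - g l \<le> c * (u - l)"
    and "disjoint_family_on (\<lambda>(l, u). {l..u}) C"
  shows "emeasure lebesgue (g ` (\<Union>(l, u)\<in>C. {l..u})) \<le> c * emeasure lebesgue (\<Union>(l, u)\<in>C. {l..u})"
proof -
  have "emeasure lebesgue (g ` (\<Union>(l, u)\<in>C. {l..u})) = (\<integral>\<^sup>+(l, u). ennreal (g u - g l) \<partial>count_space C)"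
    using emeasure_image_Union_intervals(1)[OF assms(1-3)] C assms(6) by blast
  also have "\<dots> \<le> (\<integral>\<^sup>+(l, u). c * ennreal (u - l) \<partial>count_space C)"
    using C \<open>0 \<le> c\<close> by (intro nn_integral_mono) (force simp flip: ennreal_mult intro!: ennreal_leI)
  also have "\<dots> = c * (\<integral>\<^sup>+(l, u). ennreal (id u - id l) \<partial>count_space C)"
    by (simp add: split_beta' nn_integral_cmult)
  also have "\<dots> = c * emeasure lebesgue (id ` (\<Union>(l, u)\<in>C. {l..u}))"
    using emeasure_image_Union_intervals(1)[of I id C] assms(3,6) C
    by (simp add: strict_mono_on_def)
  finally show ?thesis by simp
qed

lemma emeasure_image_Union_intervals_ge:
  fixes g :: "real \<Rightarrow> real"
  assumes "strict_mono_on I g" "continuous_on I g" "countable C" "0 \<le> c"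
    and C: "\<And>l u. (l, u) \<in> C \<Longrightarrow> l \<le> u \<and> {l..u} \<subseteq> I \<and> c * (u - l) \<le> g u - g l"
    and "disjoint_family_on (\<lambda>(l, u). {l..u}) C"
  shows "c * emeasure lebesgue (\<Union>(l, u)\<in>C. {l..u}) \<le> emeasure lebesgue (g ` (\<Union>(l, u)\<in>C. {l..u}))"
proof -
  have "c * emeasure lebesgue (\<Union>(l, u)\<in>C. {l..u}) = c * emeasure lebesgue (id ` (\<Union>(l, u)\<in>C. {l..u}))"
    by simp
  also have "\<dots> = c * (\<integral>\<^sup>+(l, u). ennreal (id u - id l) \<partial>count_space C)"
    using emeasure_image_Union_intervals(1)[of I id C] assms(3,6) C
    by (simp add: strict_mono_on_def)
  also have "\<dots> = (\<integral>\<^sup>+(l, u). c * ennreal (u - l) \<partial>count_space C)"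
    by (simp add: split_beta' nn_integral_cmult)
  also have "\<dots> \<le> (\<integral>\<^sup>+(l, u). ennreal (g u - g l) \<partial>count_space C)"
    using C \<open>0 \<le> c\<close> by (intro nn_integral_mono) (force simp flip: ennreal_mult intro!: ennreal_leI)
  also have "\<dots> = emeasure lebesgue (g ` (\<Union>(l, u)\<in>C. {l..u}))"
    using emeasure_image_Union_intervals(1)[OF assms(1-3)] C assms(6) by simp
  finally show ?thesis .
qed

lemma lmeasurable_outer_open_approx:
  assumes "T \<in> lmeasurable" "open S" "0 < e"
  obtains U where "open U" "T \<inter> S \<subseteq> U" "U \<subseteq> S" "measure lebesgue U < measure lebesgue T + e"
proof -
  obtain V where V: "open V" "T \<subseteq> V" "V - T \<in> lmeasurable" "emeasure lebesgue (V - T) < ennreal e"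
    using sets_lebesgue_outer_open[of T e] assms(1,3) by blast
  have "T \<union> (V - T) \<in> lmeasurable" using assms(1) V(3) by (rule fmeasurable.Un)
  then have "measure lebesgue (V \<inter> S) \<le> measure lebesgue (T \<union> (V - T))"
    using V(1) assms(2) by (intro measure_mono_fmeasurable) auto
  also have "\<dots> \<le> measure lebesgue T + measure lebesgue (V - T)"
    using assms(1) V(3) by (intro measure_Un_le) auto
  moreover have "measure lebesgue (V - T) < e"
    using V(3,4) assms(3) by (simp add: emeasure_eq_measure2 ennreal_less_iff)
  ultimately have "measure lebesgue (V \<inter> S) < measure lebesgue T + e"
    by linarith
  then show thesis
    using that[of "V \<inter> S"] V(1,2) assms(2) by blast
qed

lemma negligible_if_measure_contracts:
  fixes E S :: "'a::euclidean_space set"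
  assumes "E \<subseteq> S" "open S" "bounded S" "0 \<le> c" "c < 1"
    and contract: "\<And>U. open U \<Longrightarrow> E \<subseteq> U \<Longrightarrow> U \<subseteq> S \<Longrightarrow>
      \<exists>W. E \<subseteq> W \<and> W \<in> lmeasurable \<and> measure lebesgue W \<le> c * measure lebesgue U"
  shows "negligible E"
proof -
  define Ms where "Ms = {measure lebesgue T | T. E \<subseteq> T \<and> T \<in> lmeasurable}"
  define M where "M = Inf Ms"
  have "S \<in> lmeasurable" using assms(3,2) by (rule lmeasurable_open)
  then have Ms_ne: "Ms \<noteq> {}" unfolding Ms_def using assms(1) by blast
  have Ms_bdd: "bdd_below Ms" unfolding Ms_def by (rule bdd_belowI[of _ 0]) auto
  have contract_inf: "M \<le> c * (M + 2 * e)" if "0 < e" for e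
  proof -
    obtain T where T: "E \<subseteq> T" "T \<in> lmeasurable" "measure lebesgue T < M + e"
      using cInf_lessD[OF Ms_ne, of "M + e"] \<open>0 < e\<close> unfolding M_def Ms_def by auto
    obtain U where U: "open U" "T \<inter> S \<subseteq> U" "U \<subseteq> S" "measure lebesgue U < measure lebesgue T + e"
      using lmeasurable_outer_open_approx[OF T(2) assms(2) \<open>0 < e\<close>] by blast
    then have "measure lebesgue U < M + 2 * e" using T(3) by linarith
    obtain W where W: "E \<subseteq> W" "W \<in> lmeasurable" "measure lebesgue W \<le> c * measure lebesgue U"
      using contract[OF U(1) _ U(3)] T(1) U(2) assms(1) by blast
    have "M \<le> measure lebesgue W" unfolding M_def using W(1,2) Ms_bdd by (intro cInf_lower) (auto simp: Ms_def)
    also have "\<dots> \<le> c * (M + 2 * e)"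
      using W(3) \<open>measure lebesgue U < M + 2 * e\<close> \<open>0 \<le> c\<close> by (meson mult_left_mono less_imp_le order_trans)
    finally show ?thesis .
  qed
  have "M \<le> 0"
  proof (rule field_le_epsilon)
    fix e :: real assume "0 < e"
    then have "M \<le> c * (M + 2 * ((1 - c) * e / 2))"
      using \<open>c < 1\<close> by (intro contract_inf) simp
    then have "(1 - c) * M \<le> (1 - c) * (c * e)"
      by (simp add: field_simps)
    then have "M \<le> c * e" using \<open>c < 1\<close> by simp
    also have "\<dots> \<le> e" using \<open>0 < e\<close> \<open>c < 1\<close> by simp
    finally show "M \<le> 0 + e" by simp
  qed
  show ?thesis
    unfolding negligible_outer
  proof (intro allI impI)
    fix e :: real assume "0 < e"
    then obtain m where "m \<in> Ms" "m < e" using cInf_lessD[OF Ms_ne, of e] \<open>M \<le> 0\<close> unfolding M_def by auto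
    then show "\<exists>T. E \<subseteq> T \<and> T \<in> lmeasurable \<and> measure lebesgue T < e" unfolding Ms_def by auto
  qed
qed

text \<open>Points where the lower left Dini derivative of \<open>g\<close> is below \<open>r\<close> and the upper right one above \<open>s\<close>
  (up to the boundary cases); reflecting \<open>g\<close> covers the mirrored pair.\<close>

definition dini_gap_set :: "(real \<Rightarrow> real) \<Rightarrow> real \<Rightarrow> real \<Rightarrow> real set" where
  "dini_gap_set g r s = {t. (\<exists>\<^sub>F y in at_left t. (g y - g t) / (y - t) < r) \<and>
                            (\<exists>\<^sub>F y in at_right t. s < (g y - g t) / (y - t))}"

lemma dini_gap_set_left_cover:
  fixes g :: "real \<Rightarrow> real"
  assumes E: "E \<subseteq> dini_gap_set g r s" and "open U" "E \<subseteq> U"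
  obtains C where "countable C" "\<And>l u. (l, u) \<in> C \<Longrightarrow> l < u \<and> {l..u} \<subseteq> U \<and> g u - g l < r * (u - l)"
    "disjoint_family_on (\<lambda>(l, u). {l..u}) C" "negligible (E - (\<Union>(l, u)\<in>C. {l..u}))"
proof -
  have cover: "\<exists>l u. l < u \<and> t \<in> {l..u} \<and> {l..u} \<subseteq> ball t d \<and> g u - g l < r * (u - l)"
    if "t \<in> E" "0 < d" for t d
  proof -
    have "\<exists>\<^sub>F y in at_left t. (g y - g t) / (y - t) < r"
      using E \<open>t \<in> E\<close> unfolding dini_gap_set_def by blast
    then obtain y where y: "t - d < y" "y < t" "(g y - g t) / (y - t) < r"
      using \<open>0 < d\<close> by (rule frequently_at_left_realE)
    then have "g t - g y < r * (t - y)"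
      by (simp add: neg_divide_less_eq algebra_simps)
    with y show ?thesis
      by (intro exI[of _ y] exI[of _ t]) (auto simp: dist_real_def)
  qed
  show thesis
    by (rule vitali_interval_cover[OF assms(2,3) cover]) (use that in blast)+
qed

lemma dini_gap_set_right_cover:
  fixes g :: "real \<Rightarrow> real"
  assumes E: "E \<subseteq> dini_gap_set g r s" and "open U" "E \<subseteq> U"
  obtains C where "countable C" "\<And>l u. (l, u) \<in> C \<Longrightarrow> l < u \<and> {l..u} \<subseteq> U \<and> s * (u - l) < g u - g l"
    "disjoint_family_on (\<lambda>(l, u). {l..u}) C" "negligible (E - (\<Union>(l, u)\<in>C. {l..u}))"
proof -
  have cover: "\<exists>l u. l < u \<and> t \<in> {l..u} \<and> {l..u} \<subseteq> ball t d \<and> s * (u - l) < g u - g l"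
    if "t \<in> E" "0 < d" for t d
  proof -
    have "\<exists>\<^sub>F y in at_right t. s < (g y - g t) / (y - t)"
      using E \<open>t \<in> E\<close> unfolding dini_gap_set_def by blast
    then obtain y where y: "t < y" "y < t + d" "s < (g y - g t) / (y - t)"
      using \<open>0 < d\<close> by (rule frequently_at_right_realE)
    then have "s * (y - t) < g y - g t"
      by (simp add: pos_less_divide_eq)
    with y show ?thesis
      by (intro exI[of _ t] exI[of _ y]) (auto simp: dist_real_def)
  qed
  show thesis
    by (rule vitali_interval_cover[OF assms(2,3) cover]) (use that in blast)+
qed

lemma negligible_Union_Icc_diff_Union_Ioo:
  fixes C :: "(real \<times> real) set"
  assumes "countable C"
  shows "negligible ((\<Union>(l, u)\<in>C. {l..u}) - (\<Union>(l, u)\<in>C. {l<..<u}))"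
proof (rule negligible_subset)
  show "(\<Union>(l, u)\<in>C. {l..u}) - (\<Union>(l, u)\<in>C. {l<..<u}) \<subseteq> (\<Union>(l, u)\<in>C. {l, u})"
  proof
    fix x assume "x \<in> (\<Union>(l, u)\<in>C. {l..u}) - (\<Union>(l, u)\<in>C. {l<..<u})"
    then obtain l u where "(l, u) \<in> C" "x \<in> {l..u}" "x \<notin> {l<..<u}" by auto
    then show "x \<in> (\<Union>(l, u)\<in>C. {l, u})" by force
  qed
  have "countable (\<Union>(l, u)\<in>C. {l, u})" using assms by auto
  then show "negligible (\<Union>(l, u)\<in>C. {l, u})"
    by (meson countable_imp_null_set_lborel negligible_iff_null_sets null_sets_completionI)
qed

lemma emeasure_nested_interval_covers:
  fixes g :: "real \<Rightarrow> real"
  assumes mono: "strict_mono_on I g" and cont: "continuous_on I g" and "0 \<le> r" "0 \<le> s"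
    and "countable C1" and C1: "\<And>l u. (l, u) \<in> C1 \<Longrightarrow> l \<le> u \<and> {l..u} \<subseteq> I \<and> g u - g l \<le> r * (u - l)"
    and "disjoint_family_on (\<lambda>(l, u). {l..u}) C1"
    and "countable C2"
    and C2: "\<And>l u. (l, u) \<in> C2 \<Longrightarrow> l \<le> u \<and> {l..u} \<subseteq> (\<Union>(l, u)\<in>C1. {l..u}) \<and> s * (u - l) \<le> g u - g l"
    and "disjoint_family_on (\<lambda>(l, u). {l..u}) C2"
  shows "s * emeasure lebesgue (\<Union>(l, u)\<in>C2. {l..u}) \<le> r * emeasure lebesgue (\<Union>(l, u)\<in>C1. {l..u})"
proof -
  have C1_I: "l \<le> u \<and> {l..u} \<subseteq> I" if "(l, u) \<in> C1" for l u
    using C1[OF that] by blast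
  have M1_I: "(\<Union>(l, u)\<in>C1. {l..u}) \<subseteq> I"
    by (rule UN_least) (use C1_I in fastforce)
  have M2_M1: "(\<Union>(l, u)\<in>C2. {l..u}) \<subseteq> (\<Union>(l, u)\<in>C1. {l..u})"
    by (rule UN_least) (use C2 in fastforce)
  have C2_I: "l \<le> u \<and> {l..u} \<subseteq> I \<and> s * (u - l) \<le> g u - g l" if "(l, u) \<in> C2" for l u
    using C2[OF that] M1_I by blast
  have "s * emeasure lebesgue (\<Union>(l, u)\<in>C2. {l..u}) \<le> emeasure lebesgue (g ` (\<Union>(l, u)\<in>C2. {l..u}))"
    by (rule emeasure_image_Union_intervals_ge[OF mono cont assms(8,4) C2_I assms(10)])
  also have "\<dots> \<le> emeasure lebesgue (g ` (\<Union>(l, u)\<in>C1. {l..u}))"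
    using emeasure_image_Union_intervals(2)[OF mono cont assms(5) C1_I assms(7)] M2_M1
    by (intro emeasure_mono image_mono)
  also have "\<dots> \<le> r * emeasure lebesgue (\<Union>(l, u)\<in>C1. {l..u})"
    by (rule emeasure_image_Union_intervals_le[OF mono cont assms(5,3) C1 assms(7)])
  finally show ?thesis .
qed

lemma lmeasurable_superset_if_negligible_diff:
  assumes "M \<in> lmeasurable" "negligible (E - M)"
  obtains W where "E \<subseteq> W" "W \<in> lmeasurable" "measure lebesgue W = measure lebesgue M"
proof
  show "E \<subseteq> M \<union> (E - M)" by blast
  show "M \<union> (E - M) \<in> lmeasurable"
    using assms(2) by (rule fmeasurable.Un[OF assms(1) negligible_imp_measurable])
  have "E - M \<in> null_sets lebesgue"
    using assms(2) by (simp add: negligible_iff_null_sets)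
  then show "measure lebesgue (M \<union> (E - M)) = measure lebesgue M"
    by (rule measure_Un_null_set[OF fmeasurableD[OF assms(1)]])
qed

text \<open>Cover the gap set by left intervals on which \<open>g\<close> grows slower than \<open>r\<close>, then cover it again inside
  their interiors by right intervals on which \<open>g\<close> grows faster than \<open>s\<close>; comparing the measures of the
  images gives \<open>s \<bar>M\<^sub>2\<bar> \<le> \<bar>g M\<^sub>2\<bar> \<le> \<bar>g M\<^sub>1\<bar> \<le> r \<bar>M\<^sub>1\<bar> \<le> r \<bar>U\<bar>\<close>.\<close>

lemma dini_gap_set_measure_contraction:
  fixes g :: "real \<Rightarrow> real"
  assumes mono: "strict_mono_on {a<..<b} g" and cont: "continuous_on {a<..<b} g" and "0 < r" "r < s"
    and E: "E \<subseteq> dini_gap_set g r s" and U: "open U" "E \<subseteq> U" "U \<subseteq> {a<..<b}"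
  shows "\<exists>W. E \<subseteq> W \<and> W \<in> lmeasurable \<and> measure lebesgue W \<le> r / s * measure lebesgue U"
proof -
  have "0 < s" using assms by simp
  obtain C1 where C1: "countable C1" "\<And>l u. (l, u) \<in> C1 \<Longrightarrow> l < u \<and> {l..u} \<subseteq> U \<and> g u - g l < r * (u - l)"
    "disjoint_family_on (\<lambda>(l, u). {l..u}) C1" "negligible (E - (\<Union>(l, u)\<in>C1. {l..u}))"
    by (rule dini_gap_set_left_cover[OF E U(1,2)]) blast
  define M1 where "M1 = (\<Union>(l, u)\<in>C1. {l..u})"
  define V where "V = (\<Union>(l, u)\<in>C1. {l<..<u})"
  have E_V: "negligible (E - V)"
    using negligible_Un[OF C1(4) negligible_Union_Icc_diff_Union_Ioo[OF C1(1)]]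
    unfolding M1_def[symmetric] V_def[symmetric] by (rule negligible_subset) blast
  have "open V" unfolding V_def by auto
  have "E \<inter> V \<subseteq> dini_gap_set g r s" using E by blast
  then obtain C2 where C2: "countable C2" "\<And>l u. (l, u) \<in> C2 \<Longrightarrow> l < u \<and> {l..u} \<subseteq> V \<and> s * (u - l) < g u - g l"
    "disjoint_family_on (\<lambda>(l, u). {l..u}) C2" "negligible (E \<inter> V - (\<Union>(l, u)\<in>C2. {l..u}))"
    by (rule dini_gap_set_right_cover[OF _ \<open>open V\<close> Int_lower2]) blast+
  define M2 where "M2 = (\<Union>(l, u)\<in>C2. {l..u})"
  have M1_U: "M1 \<subseteq> U"
    unfolding M1_def by (rule UN_least) (use C1(2) in fastforce)
  have V_M1: "V \<subseteq> M1"
    unfolding M1_def V_def by (rule UN_mono) auto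
  have M2_V: "M2 \<subseteq> V"
    unfolding M2_def by (rule UN_least) (use C2(2) in fastforce)
  have U_lm: "U \<in> lmeasurable"
    using lmeasurable_open[OF bounded_subset[OF _ U(3)] U(1)] by simp
  have "M2 \<in> sets lebesgue"
    unfolding M2_def using C2(1) by (intro sets.countable_UN'') auto
  then have M2_lm: "M2 \<in> lmeasurable"
    using M2_V V_M1 M1_U by (intro fmeasurableI2[OF U_lm]) auto
  have "negligible (E - M2)"
    using negligible_Un[OF E_V C2(4)[folded M2_def]] by (rule negligible_subset) blast
  have C1_I: "l \<le> u \<and> {l..u} \<subseteq> {a<..<b} \<and> g u - g l \<le> r * (u - l)" if "(l, u) \<in> C1" for l u
    using C1(2)[OF that] U(3) by auto
  have C2_M1: "l \<le> u \<and> {l..u} \<subseteq> M1 \<and> s * (u - l) \<le> g u - g l" if "(l, u) \<in> C2" for l u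
    using C2(2)[OF that] V_M1 by (metis less_imp_le subset_trans)
  have "ennreal s * emeasure lebesgue M2 \<le> ennreal r * emeasure lebesgue M1"
    unfolding M1_def M2_def using \<open>0 < r\<close> \<open>0 < s\<close>
    by (intro emeasure_nested_interval_covers[OF mono cont _ _ C1(1) C1_I C1(3) C2(1) C2_M1[unfolded M1_def] C2(3)])
      auto
  also have "\<dots> \<le> ennreal r * emeasure lebesgue U"
    using M1_U U_lm by (intro mult_left_mono emeasure_mono) auto
  finally have "ennreal (s * measure lebesgue M2) \<le> ennreal (r * measure lebesgue U)"
    using M2_lm U_lm \<open>0 < r\<close> \<open>0 < s\<close> by (simp add: emeasure_eq_measure2 ennreal_mult)
  then have "measure lebesgue M2 \<le> r / s * measure lebesgue U"
    using \<open>0 < r\<close> \<open>0 < s\<close> by (simp add: field_simps)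
  moreover obtain W where "E \<subseteq> W" "W \<in> lmeasurable" "measure lebesgue W = measure lebesgue M2"
    using lmeasurable_superset_if_negligible_diff[OF M2_lm \<open>negligible (E - M2)\<close>] .
  ultimately show ?thesis by auto
qed

lemma negligible_dini_gap_set:
  fixes g :: "real \<Rightarrow> real"
  assumes mono: "strict_mono_on {a<..<b} g" and cont: "continuous_on {a<..<b} g" and "r < s"
  shows "negligible ({a<..<b} \<inter> dini_gap_set g r s)"
proof (cases "0 < r")
  case True
  then show ?thesis
    using \<open>r < s\<close>
    by (intro negligible_if_measure_contracts[of _ "{a<..<b}" "r / s"] dini_gap_set_measure_contraction[OF mono cont])
      auto
next
  case False
  have "{a<..<b} \<inter> dini_gap_set g r s = {}"
  proof (intro equals0I)
    fix t assume t: "t \<in> {a<..<b} \<inter> dini_gap_set g r s"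
    then have "\<exists>\<^sub>F y in at_left t. (g y - g t) / (y - t) < r" unfolding dini_gap_set_def by blast
    moreover have "0 < t - a" using t by simp
    ultimately obtain y where y: "t - (t - a) < y" "y < t" "(g y - g t) / (y - t) < r"
      by (rule frequently_at_left_realE)
    then have "g y < g t" using strict_mono_onD[OF mono] t by auto
    then have "0 < (g y - g t) / (y - t)" using y by (intro divide_neg_neg) auto
    then show False using y False by linarith
  qed
  then show ?thesis by simp
qed

lemma uminus_dini_gap_set_reflect:
  fixes g :: "real \<Rightarrow> real"
  shows "uminus ` dini_gap_set (\<lambda>u. - g (- u)) r s =
    {t. (\<exists>\<^sub>F y in at_right t. (g y - g t) / (y - t) < r) \<and> (\<exists>\<^sub>F y in at_left t. s < (g y - g t) / (y - t))}"
proof -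
  have slope: "(g t - g y) / (t - y) = (g y - g t) / (y - t)" for y t
    by (metis minus_diff_eq minus_divide_divide)
  have reflect: "- t \<in> dini_gap_set (\<lambda>u. - g (- u)) r s \<longleftrightarrow>
      (\<exists>\<^sub>F y in at_right t. (g y - g t) / (y - t) < r) \<and> (\<exists>\<^sub>F y in at_left t. s < (g y - g t) / (y - t))" for t
    using at_left_minus[of "- t"] at_right_minus[of "- t"]
    by (simp add: dini_gap_set_def frequently_filtermap slope)
  show ?thesis
  proof (intro set_eqI iffI)
    fix t assume "t \<in> uminus ` dini_gap_set (\<lambda>u. - g (- u)) r s"
    then have "- t \<in> dini_gap_set (\<lambda>u. - g (- u)) r s" by force
    then show "t \<in> {t. (\<exists>\<^sub>F y in at_right t. (g y - g t) / (y - t) < r) \<and> (\<exists>\<^sub>F y in at_left t. s < (g y - g t) / (y - t))}"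
      unfolding reflect by simp
  next
    fix t assume "t \<in> {t. (\<exists>\<^sub>F y in at_right t. (g y - g t) / (y - t) < r) \<and> (\<exists>\<^sub>F y in at_left t. s < (g y - g t) / (y - t))}"
    then have "- t \<in> dini_gap_set (\<lambda>u. - g (- u)) r s" unfolding reflect by simp
    then show "t \<in> uminus ` dini_gap_set (\<lambda>u. - g (- u)) r s" by (rule image_eqI[rotated]) simp
  qed
qed

lemma tendsto_if_no_gap:
  fixes q :: "'a \<Rightarrow> real"
  assumes "F \<noteq> bot" "eventually (\<lambda>y. \<bar>q y\<bar> \<le> B) F"
    and no_gap: "\<And>r s. r < s \<Longrightarrow> \<not> ((\<exists>\<^sub>F y in F. q y < r) \<and> (\<exists>\<^sub>F y in F. s < q y))"
  shows "\<exists>D. (q \<longlongrightarrow> D) F"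
proof -
  define U where "U = {c. eventually (\<lambda>y. q y < c) F}"
  have "B + 1 \<in> U" unfolding U_def mem_Collect_eq using assms(2) by (rule eventually_mono) simp
  then have U_ne: "U \<noteq> {}" by blast
  have U_bdd: "bdd_below U"
  proof (rule bdd_belowI)
    fix c assume "c \<in> U"
    then have "eventually (\<lambda>y. q y < c \<and> \<bar>q y\<bar> \<le> B) F"
      using assms(2) unfolding U_def mem_Collect_eq by (rule eventually_conj)
    then obtain y where "q y < c" "\<bar>q y\<bar> \<le> B"
      using eventually_happens'[OF assms(1)] by blast
    then show "- B \<le> c" by linarith
  qed
  have "(q \<longlongrightarrow> Inf U) F"
  proof (rule order_tendstoI)
    fix c assume "Inf U < c"
    then obtain u where "u \<in> U" "u < c" using cInf_lessD[OF U_ne] by blast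
    then show "eventually (\<lambda>y. q y < c) F" unfolding U_def by (auto elim: eventually_mono)
  next
    fix c assume "c < Inf U"
    show "eventually (\<lambda>y. c < q y) F"
    proof (rule ccontr)
      assume "\<not> eventually (\<lambda>y. c < q y) F"
      then have "\<exists>\<^sub>F y in F. q y < (2 * c + Inf U) / 3"
        using \<open>c < Inf U\<close> by (auto simp: not_eventually not_less elim!: frequently_elim1)
      moreover have "\<exists>\<^sub>F y in F. (c + 2 * Inf U) / 3 < q y"
      proof (rule ccontr)
        assume "\<not> (\<exists>\<^sub>F y in F. (c + 2 * Inf U) / 3 < q y)"
        then have "eventually (\<lambda>y. q y < (c + 5 * Inf U) / 6) F"
          using \<open>c < Inf U\<close> by (auto simp: not_frequently not_less elim!: eventually_mono)
        then have "Inf U \<le> (c + 5 * Inf U) / 6"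
          using U_bdd unfolding U_def by (intro cInf_lower) auto
        then show False using \<open>c < Inf U\<close> by simp
      qed
      ultimately show False
        using no_gap[of "(2 * c + Inf U) / 3" "(c + 2 * Inf U) / 3"] \<open>c < Inf U\<close> by simp
    qed
  qed
  then show ?thesis by blast
qed

lemma no_gap_at_if_no_gap_across:
  fixes q :: "real \<Rightarrow> real"
  assumes lr: "\<And>r s. r < s \<Longrightarrow> \<not> ((\<exists>\<^sub>F y in at_left t. q y < r) \<and> (\<exists>\<^sub>F y in at_right t. s < q y))"
    and rl: "\<And>r s. r < s \<Longrightarrow> \<not> ((\<exists>\<^sub>F y in at_right t. q y < r) \<and> (\<exists>\<^sub>F y in at_left t. s < q y))"
    and "r < s"
  shows "\<not> ((\<exists>\<^sub>F y in at t. q y < r) \<and> (\<exists>\<^sub>F y in at t. s < q y))"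
proof -
  define m where "m = (r + s) / 2"
  have m: "r < m" "m < s" using \<open>r < s\<close> unfolding m_def by simp_all
  have not_left: "\<not> ((\<exists>\<^sub>F y in at_left t. q y < r) \<and> (\<exists>\<^sub>F y in at_left t. s < q y))"
  proof
    assume left: "(\<exists>\<^sub>F y in at_left t. q y < r) \<and> (\<exists>\<^sub>F y in at_left t. s < q y)"
    then have "\<not> (\<exists>\<^sub>F y in at_right t. m < q y)" using lr[OF m(1)] by blast
    then have "\<forall>\<^sub>F y in at_right t. q y < (m + s) / 2"
      using m by (auto simp: not_frequently elim!: eventually_mono)
    then have "\<exists>\<^sub>F y in at_right t. q y < (m + s) / 2"
      by (rule eventually_frequently[OF trivial_limit_at_right_real])
    then show False using rl[of "(m + s) / 2" s] left m by simp
  qed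
  have not_right: "\<not> ((\<exists>\<^sub>F y in at_right t. q y < r) \<and> (\<exists>\<^sub>F y in at_right t. s < q y))"
  proof
    assume right: "(\<exists>\<^sub>F y in at_right t. q y < r) \<and> (\<exists>\<^sub>F y in at_right t. s < q y)"
    then have "\<not> (\<exists>\<^sub>F y in at_left t. q y < m)" using lr[OF m(2)] by blast
    then have "\<forall>\<^sub>F y in at_left t. (r + m) / 2 < q y"
      using m by (auto simp: not_frequently elim!: eventually_mono)
    then have "\<exists>\<^sub>F y in at_left t. (r + m) / 2 < q y"
      by (rule eventually_frequently[OF trivial_limit_at_left_real])
    then show False using rl[of r "(r + m) / 2"] right m by simp
  qed
  have split: "(\<exists>\<^sub>F y in at t. P y) \<longleftrightarrow> (\<exists>\<^sub>F y in at_left t. P y) \<or> (\<exists>\<^sub>F y in at_right t. P y)" for P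
    by (simp add: frequently_def eventually_at_split)
  show ?thesis
    unfolding split using lr[OF \<open>r < s\<close>] rl[OF \<open>r < s\<close>] not_left not_right by blast
qed

lemma not_differentiable_imp_dini_gap:
  fixes g :: "real \<Rightarrow> real"
  assumes "\<not> g differentiable (at t)" and bounded: "\<forall>\<^sub>F y in at t. \<bar>(g y - g t) / (y - t)\<bar> \<le> B"
  obtains r s where "r \<in> \<rat>" "s \<in> \<rat>" "r < s"
    "t \<in> dini_gap_set g r s \<union> uminus ` dini_gap_set (\<lambda>u. - g (- u)) r s"
proof -
  define q where "q y = (g y - g t) / (y - t)" for y
  have "\<not> (\<exists>D. (q \<longlongrightarrow> D) (at t))"
    using assms(1) unfolding q_def has_field_derivative_iff[symmetric] real_differentiable_def by blast
  then obtain r s where "r < s" "(\<exists>\<^sub>F y in at t. q y < r) \<and> (\<exists>\<^sub>F y in at t. s < q y)"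
    using tendsto_if_no_gap[OF at_neq_bot bounded[folded q_def]] by blast
  then obtain r s where "r < s" and gap:
    "(\<exists>\<^sub>F y in at_left t. q y < r) \<and> (\<exists>\<^sub>F y in at_right t. s < q y) \<or>
     (\<exists>\<^sub>F y in at_right t. q y < r) \<and> (\<exists>\<^sub>F y in at_left t. s < q y)"
    using no_gap_at_if_no_gap_across by metis
  obtain r' where r': "r' \<in> \<rat>" "r < r'" "r' < s" using Rats_dense_in_real[OF \<open>r < s\<close>] by blast
  obtain s' where s': "s' \<in> \<rat>" "r' < s'" "s' < s" using Rats_dense_in_real[OF r'(3)] by blast
  have weaken: "(\<exists>\<^sub>F y in F. q y < r') \<and> (\<exists>\<^sub>F y in G. s' < q y)"
    if "(\<exists>\<^sub>F y in F. q y < r) \<and> (\<exists>\<^sub>F y in G. s < q y)" for F G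
    using that r' s' by (auto elim!: frequently_elim1)
  have "t \<in> dini_gap_set g r' s' \<union> uminus ` dini_gap_set (\<lambda>u. - g (- u)) r' s'"
    using gap weaken[of "at_left t" "at_right t"] weaken[of "at_right t" "at_left t"]
    unfolding uminus_dini_gap_set_reflect by (auto simp: dini_gap_set_def q_def)
  then show thesis using that r' s' by blast
qed

lemma negligible_not_differentiable_if_bounded_slopes:
  fixes g :: "real \<Rightarrow> real"
  assumes mono: "strict_mono_on {a<..<b} g" and cont: "continuous_on {a<..<b} g"
    and bounded: "\<And>t. t \<in> {a<..<b} \<Longrightarrow> \<exists>B. \<forall>\<^sub>F y in at t. \<bar>(g y - g t) / (y - t)\<bar> \<le> B"
  shows "negligible {t \<in> {a<..<b}. \<not> g differentiable (at t)}"
proof -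
  define g' where "g' u = - g (- u)" for u
  have mono': "strict_mono_on {-b<..<-a} g'"
    using mono unfolding g'_def strict_mono_on_def by force
  have cont': "continuous_on {-b<..<-a} g'"
    unfolding g'_def by (intro continuous_intros continuous_on_compose2[OF cont]) auto
  define N where "N r s = ({a<..<b} \<inter> dini_gap_set g r s) \<union> uminus ` ({-b<..<-a} \<inter> dini_gap_set g' r s)" for r s
  have "negligible (N r s)" if "r < s" for r s
    unfolding N_def
  proof (intro negligible_Un negligible_dini_gap_set[OF mono cont that])
    show "negligible (uminus ` ({- b<..<- a} \<inter> dini_gap_set g' r s))"
      by (intro negligible_differentiable_image_negligible negligible_dini_gap_set[OF mono' cont' that])
        (auto simp: differentiable_on_def)
  qed
  then have "negligible (\<Union>(r, s)\<in>{(r, s) \<in> \<rat> \<times> \<rat>. r < s}. N r s)"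
    by (intro negligible_countable_Union countable_image countable_subset[OF _ countable_SIGMA[OF countable_rat countable_rat]]) auto
  moreover have "{t \<in> {a<..<b}. \<not> g differentiable (at t)} \<subseteq> (\<Union>(r, s)\<in>{(r, s) \<in> \<rat> \<times> \<rat>. r < s}. N r s)"
  proof
    fix t assume t: "t \<in> {t \<in> {a<..<b}. \<not> g differentiable (at t)}"
    then obtain B where B: "\<forall>\<^sub>F y in at t. \<bar>(g y - g t) / (y - t)\<bar> \<le> B" using bounded by blast
    have "\<not> g differentiable (at t)" using t by simp
    then obtain r s where rs: "r \<in> \<rat>" "s \<in> \<rat>" "r < s"
      and "t \<in> dini_gap_set g r s \<union> uminus ` dini_gap_set g' r s"
      using B unfolding g'_def by (rule not_differentiable_imp_dini_gap)
    then have "t \<in> N r s"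
      using t unfolding N_def by force
    with rs show "t \<in> (\<Union>(r, s)\<in>{(r, s) \<in> \<rat> \<times> \<rat>. r < s}. N r s)" by blast
  qed
  ultimately show ?thesis by (rule negligible_subset)
qed

lemma lipschitz_on_differentiable_ae:
  fixes f :: "real \<Rightarrow> real"
  assumes lip: "L-lipschitz_on {a<..<b} f"
  shows "negligible {t \<in> {a<..<b}. \<not> f differentiable (at t)}"
proof -
  define g where "g x = f x + (L + 1) * x" for x
  have "0 \<le> L" using lip by (rule lipschitz_on_nonneg)
  have f_slope: "\<bar>(f y - f x) / (y - x)\<bar> \<le> L" if "x \<in> {a<..<b}" "y \<in> {a<..<b}" for x y
    using lipschitz_onD[OF lip that(2,1)] \<open>0 \<le> L\<close>
    by (cases "x = y") (simp_all add: dist_real_def divide_le_eq)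
  have g_slope: "(g y - g x) / (y - x) = (f y - f x) / (y - x) + (L + 1)" if "x \<noteq> y" for x y
    using that unfolding g_def by (simp add: field_simps)
  have mono: "strict_mono_on {a<..<b} g"
  proof (rule strict_mono_onI)
    fix x y assume xy: "x \<in> {a<..<b}" "y \<in> {a<..<b}" and "x < y"
    have "- ((f y - f x) / (y - x)) \<le> L" using abs_le_D2[OF f_slope[OF xy]] .
    then have "0 < (g y - g x) / (y - x)"
      using g_slope[OF less_imp_neq[OF \<open>x < y\<close>]] \<open>0 \<le> L\<close> by linarith
    then show "g x < g y" using \<open>x < y\<close> by (simp add: zero_less_divide_iff)
  qed
  have "continuous_on {a<..<b} g"
    unfolding g_def by (intro continuous_intros lipschitz_on_continuous_on[OF lip])
  moreover have "\<exists>B. \<forall>\<^sub>F y in at t. \<bar>(g y - g t) / (y - t)\<bar> \<le> B" if "t \<in> {a<..<b}" for t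
  proof -
    have "\<forall>\<^sub>F y in at t. y \<in> {a<..<b}"
      using that by (intro eventually_at_in_open') auto
    then have "\<forall>\<^sub>F y in at t. \<bar>(g y - g t) / (y - t)\<bar> \<le> 2 * L + 1"
    proof (rule eventually_mono)
      fix y assume "y \<in> {a<..<b}"
      show "\<bar>(g y - g t) / (y - t)\<bar> \<le> 2 * L + 1"
      proof (cases "t = y")
        case False
        have "\<bar>(f y - f t) / (y - t)\<bar> \<le> L" using f_slope[OF that \<open>y \<in> {a<..<b}\<close>] .
        then show ?thesis unfolding g_slope[OF False] abs_le_iff by linarith
      qed (use \<open>0 \<le> L\<close> in simp)
    qed
    then show ?thesis by blast
  qed
  ultimately have "negligible {t \<in> {a<..<b}. \<not> g differentiable (at t)}"
    by (rule negligible_not_differentiable_if_bounded_slopes[OF mono])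
  moreover have "f differentiable (at t)" if "g differentiable (at t)" for t
  proof -
    have "(\<lambda>x. g x - (L + 1) * x) differentiable (at t)" using that by (intro derivative_intros)
    then show ?thesis unfolding g_def by simp
  qed
  then have "{t \<in> {a<..<b}. \<not> f differentiable (at t)} \<subseteq> {t \<in> {a<..<b}. \<not> g differentiable (at t)}"
    by blast
  ultimately show ?thesis by (rule negligible_subset)
qed

lemma locally_lipschitz_on_differentiable_ae:
  assumes "locally_lipschitz_on S f"
  shows "negligible {t \<in> interior S. \<not> f differentiable (at t)}"
proof -
  define N where "N p q = {t \<in> {p<..<q}. \<not> f differentiable (at t)}" for p q :: real
  define P where "P = {(p, q) \<in> \<rat> \<times> \<rat>. \<exists>L. L-lipschitz_on {p<..<q} f}"
  have "countable P"
    unfolding P_def by (rule countable_subset[OF _ countable_SIGMA[OF countable_rat countable_rat]]) auto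
  moreover have "negligible (N p q)" if "(p, q) \<in> P" for p q
    using that lipschitz_on_differentiable_ae unfolding P_def N_def by blast
  ultimately have "negligible (\<Union>(p, q)\<in>P. N p q)"
    by (intro negligible_countable_Union countable_image) auto
  moreover have "{t \<in> interior S. \<not> f differentiable (at t)} \<subseteq> (\<Union>(p, q)\<in>P. N p q)"
  proof
    fix t assume t: "t \<in> {t \<in> interior S. \<not> f differentiable (at t)}"
    then have "t \<in> S" using interior_subset by blast
    then obtain e L where "0 < e" and L: "L-lipschitz_on (cball t e \<inter> S) f"
      using assms unfolding locally_lipschitz_on_def by blast
    obtain e' where "0 < e'" "ball t e' \<subseteq> S" using t by (auto simp: mem_interior)
    define d where "d = min e e'"
    have "0 < d" using \<open>0 < e\<close> \<open>0 < e'\<close> by (simp add: d_def)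
    obtain p where p: "p \<in> \<rat>" "t - d < p" "p < t" using Rats_dense_in_real[of "t - d" t] \<open>0 < d\<close> by auto
    obtain q where q: "q \<in> \<rat>" "t < q" "q < t + d" using Rats_dense_in_real[of t "t + d"] \<open>0 < d\<close> by auto
    have "{p<..<q} \<subseteq> ball t d" using p q by (auto simp: dist_real_def)
    also have "ball t d \<subseteq> cball t e \<inter> S" using \<open>ball t e' \<subseteq> S\<close> by (auto simp: d_def)
    finally have "(p, q) \<in> P" using p q lipschitz_on_subset[OF L] unfolding P_def by blast
    moreover have "t \<in> N p q" using t p q unfolding N_def by simp
    ultimately show "t \<in> (\<Union>(p, q)\<in>P. N p q)" by blast
  qed
  ultimately show ?thesis by (rule negligible_subset)
qed

corollary locally_lipschitz_on_AE_differentiable: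
  assumes "locally_lipschitz_on S f"
  shows "AE t in lborel. t \<in> interior S \<longrightarrow> f differentiable (at t)"
proof -
  have "{t \<in> interior S. \<not> f differentiable (at t)} \<in> null_sets lebesgue"
    using locally_lipschitz_on_differentiable_ae[OF assms] by (simp add: negligible_iff_null_sets)
  then have "AE t in lebesgue. t \<notin> {t \<in> interior S. \<not> f differentiable (at t)}"
    by (rule AE_not_in)
  then have "AE t in lebesgue. t \<in> interior S \<longrightarrow> f differentiable (at t)"
    by (rule eventually_mono) blast
  then show ?thesis by (rule AE_completion_iff[THEN iffD1])
qed

section \<open>The derivative bound\<close>

lemma tendsto_norm_difference_quotient:
  assumes "(x has_vector_derivative v) (at t)"
  shows "((\<lambda>s. norm (x s - x t) / \<bar>s - t\<bar>) \<longlongrightarrow> norm v) (at t)"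
proof -
  have "((\<lambda>s. norm ((x s - x t) - (s - t) *\<^sub>R v) / \<bar>s - t\<bar>) \<longlongrightarrow> 0) (at t)"
    using assms unfolding has_vector_derivative_def has_derivative_iff_norm by simp
  moreover have "\<bar>norm (x s - x t) / \<bar>s - t\<bar> - norm v\<bar> \<le> norm ((x s - x t) - (s - t) *\<^sub>R v) / \<bar>s - t\<bar>"
    if "s \<noteq> t" for s
  proof -
    have "norm ((s - t) *\<^sub>R v) = \<bar>s - t\<bar> * norm v" by simp
    then have "norm (x s - x t) / \<bar>s - t\<bar> - norm v = (norm (x s - x t) - norm ((s - t) *\<^sub>R v)) / \<bar>s - t\<bar>"
      using that by (simp add: diff_divide_distrib)
    then show ?thesis
      using norm_triangle_ineq3[of "x s - x t" "(s - t) *\<^sub>R v"] that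
      by (simp add: divide_right_mono)
  qed
  then have "\<forall>\<^sub>F s in at t. norm (norm (x s - x t) / \<bar>s - t\<bar> - norm v) \<le> norm ((x s - x t) - (s - t) *\<^sub>R v) / \<bar>s - t\<bar>"
    by (auto simp: eventually_at_filter)
  ultimately have "((\<lambda>s. norm (x s - x t) / \<bar>s - t\<bar> - norm v) \<longlongrightarrow> 0) (at t)"
    by (rule Lim_null_comparison[rotated])
  then show ?thesis by (simp add: LIM_zero_iff)
qed

lemma abs_derivative_le_of_local_bound:
  fixes f :: "real \<Rightarrow> real" and x :: "real \<Rightarrow> 'a::real_normed_vector"
  assumes "(f has_real_derivative D) (at t)" "(x has_vector_derivative v) (at t)" "(C \<longlongrightarrow> c) (at t)"
    and bound: "\<forall>\<^sub>F s in at t. \<bar>f s - f t\<bar> \<le> C s * norm (x s - x t)"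
  shows "\<bar>D\<bar> \<le> c * norm v"
proof (rule tendsto_le[OF trivial_limit_at])
  show "((\<lambda>s. \<bar>f s - f t\<bar> / \<bar>s - t\<bar>) \<longlongrightarrow> \<bar>D\<bar>) (at t)"
    using tendsto_rabs[OF assms(1)[unfolded has_field_derivative_iff]] by simp
  show "((\<lambda>s. C s * (norm (x s - x t) / \<bar>s - t\<bar>)) \<longlongrightarrow> c * norm v) (at t)"
    by (intro tendsto_mult assms(3) tendsto_norm_difference_quotient assms(2))
  show "\<forall>\<^sub>F s in at t. \<bar>f s - f t\<bar> / \<bar>s - t\<bar> \<le> C s * (norm (x s - x t) / \<bar>s - t\<bar>)"
    using bound by eventually_elim (simp add: divide_right_mono)
qed

lemma abs_power_diff_le:
  fixes a b :: real
  assumes "0 \<le> a" "0 \<le> b"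
  shows "\<bar>b ^ k - a ^ k\<bar> \<le> real k * max a b ^ (k - 1) * \<bar>b - a\<bar>"
proof (cases "k = 0 \<or> max a b = 0")
  case True
  then show ?thesis using assms by (auto simp: max_def split: if_splits)
next
  case False
  define M where "M = max a b"
  have "0 < M" using False assms unfolding M_def by (auto simp: max_def)
  have "norm ((b / M) ^ k - (a / M) ^ k) \<le> real k * norm (b / M - a / M)"
    using \<open>0 < M\<close> assms by (intro norm_power_diff) (auto simp: M_def max_def field_simps)
  then have "M ^ k * \<bar>(b / M) ^ k - (a / M) ^ k\<bar> \<le> M ^ k * (real k * (\<bar>b - a\<bar> / M))"
    using \<open>0 < M\<close> by (intro mult_left_mono) (simp_all add: diff_divide_distrib[symmetric])
  moreover have "M ^ k * \<bar>(b / M) ^ k - (a / M) ^ k\<bar> = \<bar>b ^ k - a ^ k\<bar>"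
    using \<open>0 < M\<close> by (simp add: power_divide diff_divide_distrib[symmetric])
  moreover have "M ^ k * (real k * (\<bar>b - a\<bar> / M)) = real k * M ^ (k - 1) * \<bar>b - a\<bar>"
    using \<open>0 < M\<close> False by (cases k) (auto simp: field_simps)
  ultimately show ?thesis unfolding M_def by simp
qed

lemma abs_deriv_le_of_power_level_set:
  fixes x x' :: "real \<Rightarrow> 'a::real_normed_vector" and lam :: "real \<Rightarrow> real"
  assumes "(lam has_real_derivative D) (at t)" "0 < lam t" "0 < \<theta>"
    and "(x has_vector_derivative x' t) (at t)" "isCont x' t"
    and level: "\<forall>\<^sub>F s in nhds t. lam s * norm (x' s) ^ k = \<theta>"
    and lip: "\<forall>\<^sub>F s in nhds t. \<bar>norm (x' s) - norm (x' t)\<bar> \<le> norm (x s - x t)"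
  shows "\<bar>D\<bar> \<le> real k * lam t"
proof -
  define \<phi> where "\<phi> s = norm (x' s)" for s
  define C where "C s = real k * max (\<phi> t) (\<phi> s) ^ (k - 1)" for s
  have C_nonneg: "0 \<le> C s" for s
  proof -
    have "0 \<le> max (\<phi> t) (\<phi> s)" by (simp add: \<phi>_def le_max_iff_disj)
    then show ?thesis unfolding C_def by simp
  qed
  have level_t: "\<theta> / lam t = \<phi> t ^ k"
    using eventually_nhds_x_imp_x[OF level] \<open>0 < lam t\<close> unfolding \<phi>_def by (simp add: field_simps)
  have "((\<lambda>s. \<theta> * inverse (lam s)) has_real_derivative - (\<theta> * D / (lam t)\<^sup>2)) (at t)"
    using assms(1,2) by (auto intro!: derivative_eq_intros simp: power2_eq_square field_simps)
  moreover have "(C \<longlongrightarrow> real k * max (\<phi> t) (\<phi> t) ^ (k - 1)) (at t)"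
    unfolding C_def \<phi>_def using assms(5) by (intro tendsto_intros) (simp add: isCont_def)
  moreover have "\<forall>\<^sub>F s in at t. \<bar>\<theta> * inverse (lam s) - \<theta> * inverse (lam t)\<bar> \<le> C s * norm (x s - x t)"
    unfolding eventually_at_filter using level lip
  proof eventually_elim
    case (elim s)
    have "lam s \<noteq> 0" using elim(1) \<open>0 < \<theta>\<close> by auto
    then have "\<theta> * inverse (lam s) = \<phi> s ^ k" using elim(1) by (auto simp: \<phi>_def field_simps)
    then have "\<bar>\<theta> * inverse (lam s) - \<theta> * inverse (lam t)\<bar> = \<bar>\<phi> s ^ k - \<phi> t ^ k\<bar>"
      using level_t by (simp add: divide_inverse)
    also have "\<dots> \<le> C s * \<bar>\<phi> s - \<phi> t\<bar>"
      using abs_power_diff_le[of "\<phi> t" "\<phi> s" k] unfolding C_def \<phi>_def by simp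
    also have "\<dots> \<le> C s * norm (x s - x t)"
      using elim(2) C_nonneg unfolding \<phi>_def by (rule mult_left_mono)
    finally show ?case by simp
  qed
  ultimately have "\<bar>- (\<theta> * D / (lam t)\<^sup>2)\<bar> \<le> real k * max (\<phi> t) (\<phi> t) ^ (k - 1) * \<phi> t"
    unfolding \<phi>_def by (rule abs_derivative_le_of_local_bound[OF _ assms(4)])
  also have "\<dots> = real k * (\<theta> / lam t)"
    using level_t by (cases k) auto
  finally have "\<theta> * \<bar>D\<bar> / (lam t)\<^sup>2 \<le> real k * (\<theta> / lam t)"
    using \<open>0 < \<theta>\<close> by (simp add: abs_mult)
  then have "\<theta> * \<bar>D\<bar> \<le> real k * (\<theta> / lam t) * (lam t)\<^sup>2"
    using \<open>0 < lam t\<close> by (simp add: divide_le_eq)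
  also have "\<dots> = \<theta> * (real k * lam t)"
    using \<open>0 < lam t\<close> by (simp add: power2_eq_square)
  finally show ?thesis
    using \<open>0 < \<theta>\<close> by simp
qed

lemma abs_deriv_step_size_le:
  fixes A :: "'a::{real_inner, complete_space} \<Rightarrow> 'a set" and x x' :: "real \<Rightarrow> 'a"
  assumes mm: "maximal_monotone A" and "0 < \<theta>" and t: "t \<in> interior T"
    and pos: "\<And>s. s \<in> T \<Longrightarrow> 0 < lam s"
    and flow: "\<And>s. s \<in> T \<Longrightarrow> x' s = resolvent (lam s) A (x s) - x s"
    and level: "\<And>s. s \<in> T \<Longrightarrow> lam s * norm (x' s) ^ k = \<theta>"
    and "(x has_vector_derivative x' t) (at t within T)" "continuous_on T x'"
    and D: "(lam has_real_derivative D) (at t)"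
  shows "\<bar>D\<bar> \<le> real k * lam t"
proof -
  have "t \<in> T" using t interior_subset by blast
  have near: "\<forall>\<^sub>F s in nhds t. s \<in> T"
    using eventually_nhds_in_open[OF open_interior t] by (rule eventually_mono) (use interior_subset in blast)
  have "(x has_vector_derivative x' t) (at t)"
    using assms(7) unfolding at_within_interior[OF t] .
  moreover have "isCont x' t"
    using continuous_on_interior[OF assms(8) t] .
  moreover have "\<forall>\<^sub>F s in nhds t. lam s * norm (x' s) ^ k = \<theta>"
    using near by (rule eventually_mono) (rule level)
  moreover have "\<forall>\<^sub>F s in nhds t. \<bar>norm (x' s) - norm (x' t)\<bar> \<le> norm (x s - x t)"
    using near
  proof (rule eventually_mono)
    fix s assume "s \<in> T"
    have "lam r * norm (resolvent (lam r) A (x r) - x r) ^ k = \<theta>" if "r \<in> T" for r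
      using level[OF that] unfolding flow[OF that] .
    then show "\<bar>norm (x' s) - norm (x' t)\<bar> \<le> norm (x s - x t)"
      unfolding flow[OF \<open>s \<in> T\<close>] flow[OF \<open>t \<in> T\<close>]
      using resolvent_residual_lipschitz_on_level_set[OF mm pos[OF \<open>t \<in> T\<close>] pos[OF \<open>s \<in> T\<close>]]
        \<open>s \<in> T\<close> \<open>t \<in> T\<close> by blast
  qed
  ultimately show ?thesis
    by (rule abs_deriv_le_of_power_level_set[OF D pos[OF \<open>t \<in> T\<close>] \<open>0 < \<theta>\<close>])
qed

lemma AE_has_bounded_derivative:
  fixes f B :: "real \<Rightarrow> real"
  assumes "AE t in lborel. t \<in> {a<..<b} \<longrightarrow> f differentiable (at t)"
    and bound: "\<And>t D. t \<in> {a<..<b} \<Longrightarrow> (f has_real_derivative D) (at t) \<Longrightarrow> \<bar>D\<bar> \<le> B t"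
  shows "AE t in lborel. t \<in> {a..b} \<longrightarrow> (\<exists>D. (f has_real_derivative D) (at t within {a..b}) \<and> \<bar>D\<bar> \<le> B t)"
proof -
  have "AE t in lborel. t \<notin> {a, b}"
    by (rule AE_not_in) (simp add: countable_imp_null_set_lborel)
  with assms(1) show ?thesis
  proof eventually_elim
    case (elim t)
    show ?case
    proof
      assume "t \<in> {a..b}"
      with elim have t: "t \<in> {a<..<b}" and "f differentiable (at t)" by auto
      then obtain D where D: "(f has_real_derivative D) (at t)"
        by (auto simp: real_differentiable_def)
      show "\<exists>D. (f has_real_derivative D) (at t within {a..b}) \<and> \<bar>D\<bar> \<le> B t"
        by (intro exI[of _ D] conjI has_field_derivative_at_within[OF D] bound[OF t D])
    qed
  qed
qed

theorem lemma2p4: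
  fixes A :: "'a::{real_inner, complete_space} \<Rightarrow> 'a set"
    and \<theta> t0 :: real and p :: nat
    and x x' :: "real \<Rightarrow> 'a" and lam :: "real \<Rightarrow> real"
  assumes "maximal_monotone A"
    and "\<exists>z. 0 \<in> A z"
    and "\<theta> > 0" and "p \<ge> 1"
    and "\<And>t. t \<in> {0..t0} \<Longrightarrow> lam t > 0"
    and "\<And>t. t \<in> {0..t0} \<Longrightarrow> (x has_vector_derivative x' t) (at t within {0..t0})"
    and "continuous_on {0..t0} x'"
    and "locally_lipschitz_on {0..t0} lam"
    and "\<And>t. t \<in> {0..t0} \<Longrightarrow> x' t + x t - resolvent (lam t) A (x t) = 0"
    and "\<And>t. t \<in> {0..t0} \<Longrightarrow>
           lam t * norm (resolvent (lam t) A (x t) - x t) ^ (p - 1) = \<theta>"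
    and "0 \<notin> A (x 0)"
  shows "AE t in lborel. t \<in> {0..t0} \<longrightarrow>
           (\<exists>D. (lam has_real_derivative D) (at t within {0..t0}) \<and>
                \<bar>D\<bar> \<le> (real p - 1) * lam t)"
proof -
  have flow: "x' s = resolvent (lam s) A (x s) - x s" if "s \<in> {0..t0}" for s
    using assms(9)[OF that] by (simp add: algebra_simps eq_neg_iff_add_eq_0)
  have level: "lam s * norm (x' s) ^ (p - 1) = \<theta>" if "s \<in> {0..t0}" for s
    using assms(10)[OF that] flow[OF that] by simp
  show ?thesis
  proof (rule AE_has_bounded_derivative)
    show "AE t in lborel. t \<in> {0<..<t0} \<longrightarrow> lam differentiable (at t)"
      using locally_lipschitz_on_AE_differentiable[OF assms(8)] by simp
    show "\<bar>D\<bar> \<le> (real p - 1) * lam t" if "t \<in> {0<..<t0}" "(lam has_real_derivative D) (at t)" for t D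
      using abs_deriv_step_size_le[OF assms(1,3) _ assms(5) flow level assms(6) assms(7) that(2)] that(1)
        assms(4) by simp
  qed
qed

end
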